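(* Let $\rho$ be an unknown density matrix and $U=e^{-i\rho}$. Kitaev's phase estimation on $U$ (estimating an eigenphase of $U$ on a given input state) to precision $\epsilon$ with constant failure probability can be performed using $O(1/\epsilon^2)$ copies of $\rho$.
   Context: Kitaev's phase estimation to precision $\epsilon$ with constant failure probability uses $O(1/\epsilon)$ applications of controlled-$U$; here each controlled-$U$ must be simulated from copies of $\rho$. *)

theory Defs
  imports "Jordan_Normal_Form.Matrix" "Jordan_Normal_Form.Schur_Decomposition"
begin

definition kron :: "complex mat \<Rightarrow> complex mat \<Rightarrow> complex mat" where
  "kron A B = mat (dim_row A * dim_row B) (dim_col A * dim_col B)
     (\<lambda>(i,j). A $$ (i div dim_row B, j div dim_col B) * B $$ (i mod dim_row B, j mod dim_col B))"

fun kpow :: "complex mat \<Rightarrow> nat \<Rightarrow> complex mat" where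
  "kpow A 0 = 1\<^sub>m 1"
| "kpow A (Suc n) = kron (kpow A n) A"

definition mat_exp :: "complex mat \<Rightarrow> complex mat" where
  "mat_exp A = mat (dim_row A) (dim_col A)
     (\<lambda>(i,j). \<Sum>k. (A ^\<^sub>m k) $$ (i,j) / of_nat (fact k))"

definition psd :: "nat \<Rightarrow> complex mat \<Rightarrow> bool" where
  "psd d A \<longleftrightarrow> A \<in> carrier_mat d d \<and> mat_adjoint A = A \<and>
     (\<forall>v \<in> carrier_vec d. 0 \<le> Re (\<Sum>i<d. cnj (v $ i) * (A *\<^sub>v v) $ i))"

definition mtrace :: "complex mat \<Rightarrow> complex" where
  "mtrace A = (\<Sum>i<dim_row A. A $$ (i,i))"

definition density_matrix :: "nat \<Rightarrow> complex mat \<Rightarrow> bool" where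
  "density_matrix d \<rho> \<longleftrightarrow> psd d \<rho> \<and> mtrace \<rho> = 1"

definition unit_state :: "nat \<Rightarrow> complex vec \<Rightarrow> bool" where
  "unit_state d v \<longleftrightarrow> v \<in> carrier_vec d \<and> (\<Sum>i<d. cmod (v $ i) ^ 2) = 1"

definition proj :: "complex vec \<Rightarrow> complex mat" where
  "proj v = mat (dim_vec v) (dim_vec v) (\<lambda>(i,j). v $ i * cnj (v $ j))"

definition povm :: "nat \<Rightarrow> nat \<Rightarrow> (nat \<Rightarrow> complex mat) \<Rightarrow> bool" where
  "povm D m M \<longleftrightarrow> (\<forall>k<m. psd D (M k)) \<and>
     mat D D (\<lambda>(i,j). \<Sum>k<m. M k $$ (i,j)) = 1\<^sub>m D"

definition phase_close :: "real \<Rightarrow> real \<Rightarrow> real \<Rightarrow> bool" where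
  "phase_close eps x theta \<longleftrightarrow> (\<exists>k::int. \<bar>x - theta - 2 * pi * of_int k\<bar> \<le> eps)"

end

theory Submission
  imports Defs
begin

(* Rather than simulating controlled powers of e^{-i rho} as in Kitaev's algorithm, the estimator
   measures a swap test. If e^{-i rho} psi = e^{i theta} psi then psi is an eigenvector of rho,
   rho psi = lam psi with theta = -lam (mod 2 pi), because the spectrum of a density matrix lies in
   [0,1], where mu \<mapsto> e^{-i mu} is injective. Let S_i swap the i-th of n copies of rho with the
   register holding psi and O = (1/n) sum_i S_i. In the state rho^{\<otimes>n} \<otimes> |psi><psi| one has
   tr(S_i X) = <psi|rho|psi> = lam, tr(S_i S_j X) = lam^2 for i \<noteq> j and S_i^2 = 1, so O has mean lam
   and variance (1 - lam^2)/n \<le> 1/n. Measuring O in an eigenbasis and reporting minus the observed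
   eigenvalue therefore fails to be eps-close to theta with probability at most 1/(n eps^2) by
   Chebyshev's inequality, which is at most delta for n = \<lceil>1/(delta eps^2)\<rceil> copies. *)


section \<open>Adjoints, traces and unitary diagonalisation\<close>

lemma mat_adjoint_eq: "mat_adjoint A = mat (dim_col A) (dim_row A) (\<lambda>(i,j). cnj (A $$ (j,i)))"
  unfolding mat_adjoint_def by (auto simp: mat_of_rows_def)

lemma dim_mat_adjoint[simp]:
  "dim_row (mat_adjoint (A::complex mat)) = dim_col A"
  "dim_col (mat_adjoint (A::complex mat)) = dim_row A"
  by (simp_all add: mat_adjoint_eq)

lemma index_mat_adjoint[simp]:
  "i < dim_col (A::complex mat) \<Longrightarrow> j < dim_row A \<Longrightarrow> mat_adjoint A $$ (i,j) = cnj (A $$ (j,i))"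
  by (auto simp: mat_adjoint_eq)

lemma mat_adjoint_mat_adjoint[simp]: "mat_adjoint (mat_adjoint A) = (A::complex mat)"
  by (rule eq_matI) simp_all

lemma mat_adjoint_carrier[simp]: "(A::complex mat) \<in> carrier_mat n m \<Longrightarrow> mat_adjoint A \<in> carrier_mat m n"
  by (metis dim_mat_adjoint carrier_matD carrier_matI)

lemma mat_adjoint_smult: "mat_adjoint (k \<cdot>\<^sub>m A) = cnj k \<cdot>\<^sub>m mat_adjoint A"
  by (rule eq_matI) auto

lemma mat_adjoint_one: "mat_adjoint (1\<^sub>m d) = (1\<^sub>m d :: complex mat)"
  by (rule eq_matI) auto

lemma index_mult_mat_sum:
  fixes A B :: "'a::comm_semiring_0 mat"
  assumes "A \<in> carrier_mat n m" "B \<in> carrier_mat m p" "i < n" "j < p"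
  shows "(A * B) $$ (i,j) = (\<Sum>k<m. A $$ (i,k) * B $$ (k,j))"
  using assms by (auto simp: scalar_prod_def lessThan_atLeast0 intro: sum.cong)

lemma index_mult_mat_vec_sum:
  fixes A :: "'a::comm_semiring_0 mat"
  assumes "A \<in> carrier_mat n m" "v \<in> carrier_vec m" "a < n"
  shows "(A *\<^sub>v v) $ a = (\<Sum>b<m. A $$ (a,b) * v $ b)"
  using assms by (simp add: scalar_prod_def lessThan_atLeast0)

lemma mat_adjoint_mult:
  fixes A B :: "complex mat"
  assumes A: "A \<in> carrier_mat n m" and B: "B \<in> carrier_mat m p"
  shows "mat_adjoint (A * B) = mat_adjoint B * mat_adjoint A"
proof (rule eq_matI)
  fix i j assume "i < dim_row (mat_adjoint B * mat_adjoint A)" "j < dim_col (mat_adjoint B * mat_adjoint A)"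
  hence i: "i < p" and j: "j < n" using assms by auto
  have "mat_adjoint (A * B) $$ (i, j) = cnj (\<Sum>k<m. A $$ (j,k) * B $$ (k,i))"
    using i j assms index_mult_mat_sum[OF A B j i] by simp
  also have "\<dots> = (\<Sum>k<m. mat_adjoint B $$ (i,k) * mat_adjoint A $$ (k,j))"
    using assms i j by (auto simp: mult.commute intro: sum.cong)
  also have "\<dots> = (mat_adjoint B * mat_adjoint A) $$ (i, j)"
    using assms i j by (intro index_mult_mat_sum[symmetric]) auto
  finally show "mat_adjoint (A * B) $$ (i, j) = (mat_adjoint B * mat_adjoint A) $$ (i, j)" .
qed (use assms in auto)

lemma trace_smult: "M \<in> carrier_mat N N \<Longrightarrow> mtrace (k \<cdot>\<^sub>m M) = k * mtrace M"
  by (simp add: mtrace_def sum_distrib_left)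

lemma trace_mult_sum:
  assumes "A \<in> carrier_mat N N" and "Y \<in> carrier_mat N N"
  shows "mtrace (A * Y) = (\<Sum>a<N. \<Sum>b<N. A $$ (a,b) * Y $$ (b,a))"
  using assms by (auto simp: mtrace_def scalar_prod_def lessThan_atLeast0 intro!: sum.cong)

lemma cinner_self: "(\<Sum>i\<in>I. v i * cnj (v i)) = complex_of_real (\<Sum>i\<in>I. (cmod (v i))\<^sup>2)"
  by (simp add: complex_norm_square flip: of_real_power)

lemma unit_state_cinner:
  assumes "unit_state d \<psi>" shows "(\<Sum>a<d. \<psi> $ a * cnj (\<psi> $ a)) = 1"
  using assms by (simp add: unit_state_def cinner_self)

definition diag_matrix :: "nat \<Rightarrow> (nat \<Rightarrow> complex) \<Rightarrow> complex mat" where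
  "diag_matrix n f = mat n n (\<lambda>(i,j). if i = j then f i else 0)"

lemma diag_matrix_carrier[simp]: "diag_matrix n f \<in> carrier_mat n n"
  by (simp add: diag_matrix_def)

lemma diag_matrix_mult: "diag_matrix n f * diag_matrix n g = diag_matrix n (\<lambda>k. f k * g k)"
proof (rule eq_matI)
  fix i j assume "i < dim_row (diag_matrix n (\<lambda>k. f k * g k))" "j < dim_col (diag_matrix n (\<lambda>k. f k * g k))"
  hence i: "i < n" and j: "j < n" by (auto simp: diag_matrix_def)
  have "(diag_matrix n f * diag_matrix n g) $$ (i,j)
      = (\<Sum>l<n. if l = i then (if i = j then f i * g i else 0) else 0)"
    unfolding index_mult_mat_sum[OF diag_matrix_carrier diag_matrix_carrier i j]
    using i j by (intro sum.cong) (auto simp: diag_matrix_def)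
  thus "(diag_matrix n f * diag_matrix n g) $$ (i,j) = diag_matrix n (\<lambda>k. f k * g k) $$ (i,j)"
    using i j by (simp add: diag_matrix_def)
qed (auto simp: diag_matrix_def)

lemma diag_matrix_one: "diag_matrix n (\<lambda>_. 1) = 1\<^sub>m n"
  by (rule eq_matI) (auto simp: diag_matrix_def)

lemma mat_adjoint_diag_matrix: "mat_adjoint (diag_matrix n f) = diag_matrix n (\<lambda>k. cnj (f k))"
  by (rule eq_matI) (auto simp: diag_matrix_def)

lemma index_conj_diag_matrix:
  assumes U: "U \<in> carrier_mat n n" and "i < n" and "j < n"
  shows "(U * diag_matrix n f * mat_adjoint U) $$ (i,j) = (\<Sum>k<n. U $$ (i,k) * f k * cnj (U $$ (j,k)))"
proof -
  have "(U * diag_matrix n f) $$ (i,k) = U $$ (i,k) * f k" if "k < n" for k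
  proof -
    have "(U * diag_matrix n f) $$ (i,k) = (\<Sum>l<n. if l = k then U $$ (i,l) * f k else 0)"
      unfolding index_mult_mat_sum[OF U diag_matrix_carrier \<open>i < n\<close> that]
      using that by (intro sum.cong) (auto simp: diag_matrix_def)
    thus ?thesis using that by simp
  qed
  moreover have "(U * diag_matrix n f * mat_adjoint U) $$ (i,j)
      = (\<Sum>k<n. (U * diag_matrix n f) $$ (i,k) * mat_adjoint U $$ (k,j))"
    using assms by (intro index_mult_mat_sum[of _ n n _ n]) auto
  ultimately show ?thesis
    using assms by (auto intro: sum.cong)
qed

lemma conj_diag_matrix_carrier: "U \<in> carrier_mat n n \<Longrightarrow> U * diag_matrix n f * mat_adjoint U \<in> carrier_mat n n"
  by (metis mat_adjoint_carrier diag_matrix_carrier mult_carrier_mat)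

definition unitary_mat :: "nat \<Rightarrow> complex mat \<Rightarrow> bool" where
  "unitary_mat n U \<longleftrightarrow> U \<in> carrier_mat n n \<and> mat_adjoint U * U = 1\<^sub>m n \<and> U * mat_adjoint U = 1\<^sub>m n"

lemma unitary_matI:
  assumes "U \<in> carrier_mat n n" and "mat_adjoint U * U = 1\<^sub>m n"
  shows "unitary_mat n U"
  using assms mat_mult_left_right_inverse[OF mat_adjoint_carrier[OF assms(1)] assms(1)]
  by (simp add: unitary_mat_def)

lemma unitary_mat_mult:
  assumes W: "unitary_mat n W" and V: "unitary_mat n V"
  shows "unitary_mat n (W * V)"
proof (rule unitary_matI)
  have Wc: "W \<in> carrier_mat n n" and Vc: "V \<in> carrier_mat n n"
    using W V by (auto simp: unitary_mat_def)
  have "mat_adjoint (W * V) * (W * V) = mat_adjoint V * ((mat_adjoint W * W) * V)"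
    using Wc Vc by (simp add: mat_adjoint_mult[OF Wc Vc] assoc_mult_mat[of _ n n _ n _ n])
  thus "mat_adjoint (W * V) * (W * V) = 1\<^sub>m n"
    using W V Vc by (simp add: unitary_mat_def)
qed (use W V in \<open>auto simp: unitary_mat_def\<close>)

lemma unitary_col_cinner:
  assumes U: "unitary_mat d U" and "k < d" and "l < d"
  shows "(\<Sum>a<d. cnj (U $$ (a,k)) * U $$ (a,l)) = (if k = l then 1 else 0)"
proof -
  have Uc: "U \<in> carrier_mat d d" using U by (simp add: unitary_mat_def)
  have "(mat_adjoint U * U) $$ (k,l) = (\<Sum>a<d. cnj (U $$ (a,k)) * U $$ (a,l))"
    unfolding index_mult_mat_sum[OF mat_adjoint_carrier[OF Uc] Uc assms(2,3)]
    using assms Uc by (auto intro: sum.cong)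
  thus ?thesis using U assms by (simp add: unitary_mat_def)
qed

lemma unitary_adjoint_col:
  assumes U: "unitary_mat d U" and l: "l < d"
  shows "mat_adjoint U *\<^sub>v col U l = unit_vec d l"
proof -
  have Uc: "U \<in> carrier_mat d d" using U by (simp add: unitary_mat_def)
  have cl: "col U l \<in> carrier_vec d" using Uc by (metis carrier_matD(1) carrier_vecI dim_col)
  show ?thesis
  proof (rule eq_vecI)
    fix k assume "k < dim_vec (unit_vec d l)"
    hence k: "k < d" by simp
    have "(mat_adjoint U *\<^sub>v col U l) $ k = (\<Sum>a<d. cnj (U $$ (a,k)) * U $$ (a,l))"
      unfolding index_mult_mat_vec_sum[OF mat_adjoint_carrier[OF Uc] cl k]
      using Uc k l by (intro sum.cong) auto
    thus "(mat_adjoint U *\<^sub>v col U l) $ k = unit_vec d l $ k"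
      using unitary_col_cinner[OF U k l] k by (simp add: unit_vec_def)
  qed (use Uc in simp)
qed

lemma trace_unitary_conj_diag:
  assumes U: "unitary_mat d U"
  shows "mtrace (U * diag_matrix d f * mat_adjoint U) = (\<Sum>k<d. f k)"
proof -
  have Uc: "U \<in> carrier_mat d d" using U by (simp add: unitary_mat_def)
  have "mtrace (U * diag_matrix d f * mat_adjoint U) = (\<Sum>a<d. \<Sum>k<d. f k * (cnj (U $$ (a,k)) * U $$ (a,k)))"
    unfolding mtrace_def using Uc conj_diag_matrix_carrier[OF Uc, of f]
    by (intro sum.cong) (auto simp del: index_mult_mat assoc_mult_mat simp: index_conj_diag_matrix ac_simps)
  also have "\<dots> = (\<Sum>k<d. f k * (\<Sum>a<d. cnj (U $$ (a,k)) * U $$ (a,k)))"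
    by (subst sum.swap) (simp add: sum_distrib_left)
  also have "\<dots> = (\<Sum>k<d. f k)"
    by (simp add: unitary_col_cinner[OF U])
  finally show ?thesis .
qed

lemma unitary_conj_diag_mult:
  assumes U: "unitary_mat n U"
  shows "U * diag_matrix n f * mat_adjoint U * (U * diag_matrix n g * mat_adjoint U)
       = U * diag_matrix n (\<lambda>k. f k * g k) * mat_adjoint U"
proof -
  have Uc: "U \<in> carrier_mat n n" using U by (simp add: unitary_mat_def)
  have "U * diag_matrix n f * mat_adjoint U * (U * diag_matrix n g * mat_adjoint U)
      = U * diag_matrix n f * (mat_adjoint U * U) * diag_matrix n g * mat_adjoint U"
    using Uc by (simp add: assoc_mult_mat[of _ n n _ n _ n] mult_carrier_mat[of _ n n _ n])
  also have "\<dots> = U * (diag_matrix n f * diag_matrix n g) * mat_adjoint U"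
    using U Uc by (simp add: unitary_mat_def assoc_mult_mat[of _ n n _ n _ n] right_mult_one_mat[of _ n n])
  finally show ?thesis by (simp add: diag_matrix_mult)
qed

lemma unitary_conj_diag_power:
  assumes U: "unitary_mat n U"
  shows "(U * diag_matrix n f * mat_adjoint U) ^\<^sub>m p = U * diag_matrix n (\<lambda>k. f k ^ p) * mat_adjoint U"
proof (induction p)
  case 0
  have Uc: "U \<in> carrier_mat n n" using U by (simp add: unitary_mat_def)
  then show ?case
    using U conj_diag_matrix_carrier[OF Uc] by (simp add: diag_matrix_one unitary_mat_def)
next
  case (Suc p)
  then show ?case by (simp add: unitary_conj_diag_mult[OF U] mult.commute)
qed

lemma smult_conj_diag_matrix:
  assumes U: "U \<in> carrier_mat n n"
  shows "c \<cdot>\<^sub>m (U * diag_matrix n f * mat_adjoint U) = U * diag_matrix n (\<lambda>k. c * f k) * mat_adjoint U"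
proof (rule eq_matI)
  fix i j
  assume "i < dim_row (U * diag_matrix n (\<lambda>k. c * f k) * mat_adjoint U)"
    and "j < dim_col (U * diag_matrix n (\<lambda>k. c * f k) * mat_adjoint U)"
  hence i: "i < n" and j: "j < n" using U by auto
  have "(c \<cdot>\<^sub>m (U * diag_matrix n f * mat_adjoint U)) $$ (i,j) = c * (\<Sum>k<n. U $$ (i,k) * f k * cnj (U $$ (j,k)))"
    using U i j conj_diag_matrix_carrier[OF U, of f]
    by (subst index_smult_mat) (auto simp del: index_mult_mat simp: index_conj_diag_matrix)
  also have "\<dots> = (U * diag_matrix n (\<lambda>k. c * f k) * mat_adjoint U) $$ (i,j)"
    by (simp only: index_conj_diag_matrix[OF U i j] sum_distrib_left) (simp add: ac_simps)
  finally show "(c \<cdot>\<^sub>m (U * diag_matrix n f * mat_adjoint U)) $$ (i,j)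
      = (U * diag_matrix n (\<lambda>k. c * f k) * mat_adjoint U) $$ (i,j)" .
qed (use U in auto)

lemma exp_sums: "(\<lambda>p. z ^ p / of_nat (fact p)) sums exp (z::complex)"
  using exp_converges[of z] by (simp add: scaleR_conv_of_real divide_inverse mult.commute)

lemma mat_exp_unitary_conj_diag:
  assumes U: "unitary_mat n U"
  shows "mat_exp (U * diag_matrix n f * mat_adjoint U) = U * diag_matrix n (\<lambda>k. exp (f k)) * mat_adjoint U"
proof (rule eq_matI)
  have Uc: "U \<in> carrier_mat n n" using U by (simp add: unitary_mat_def)
  fix a b
  assume "a < dim_row (U * diag_matrix n (\<lambda>k. exp (f k)) * mat_adjoint U)"
    and "b < dim_col (U * diag_matrix n (\<lambda>k. exp (f k)) * mat_adjoint U)"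
  hence a: "a < n" and b: "b < n" using Uc by auto
  have "mat_exp (U * diag_matrix n f * mat_adjoint U) $$ (a,b)
      = (\<Sum>p. \<Sum>k<n. U $$ (a,k) * cnj (U $$ (b,k)) * (f k ^ p / of_nat (fact p)))"
    using a b conj_diag_matrix_carrier[OF Uc, of f]
    by (simp only: mat_exp_def index_mat carrier_matD split unitary_conj_diag_power[OF U]
        index_conj_diag_matrix[OF Uc a b] sum_divide_distrib) (simp add: ac_simps)
  also have "\<dots> = (\<Sum>k<n. \<Sum>p. U $$ (a,k) * cnj (U $$ (b,k)) * (f k ^ p / of_nat (fact p)))"
    by (rule suminf_sum) (intro summable_mult sums_summable[OF exp_sums])
  also have "\<dots> = (\<Sum>k<n. U $$ (a,k) * cnj (U $$ (b,k)) * exp (f k))"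
    by (intro sum.cong refl sums_unique[symmetric] sums_mult exp_sums)
  also have "\<dots> = (U * diag_matrix n (\<lambda>k. exp (f k)) * mat_adjoint U) $$ (a,b)"
    by (simp add: index_conj_diag_matrix[OF Uc a b] ac_simps)
  finally show "mat_exp (U * diag_matrix n f * mat_adjoint U) $$ (a,b)
      = (U * diag_matrix n (\<lambda>k. exp (f k)) * mat_adjoint U) $$ (a,b)" .
qed (use assms in \<open>auto simp: mat_exp_def unitary_mat_def\<close>)

lemma unitary_conj_diag_eigen:
  assumes U: "unitary_mat n U" and v: "v \<in> carrier_vec n"
  shows "U * diag_matrix n f * mat_adjoint U *\<^sub>v v = w \<cdot>\<^sub>v v \<longleftrightarrow>
    (\<forall>k<n. f k * (mat_adjoint U *\<^sub>v v) $ k = w * (mat_adjoint U *\<^sub>v v) $ k)"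
proof -
  have Uc: "U \<in> carrier_mat n n" and UU: "mat_adjoint U * U = 1\<^sub>m n" and UU': "U * mat_adjoint U = 1\<^sub>m n"
    using U by (auto simp: unitary_mat_def)
  have Ua: "mat_adjoint U \<in> carrier_mat n n" using Uc by simp
  define c where "c = mat_adjoint U *\<^sub>v v"
  have c: "c \<in> carrier_vec n" using Ua v by (simp add: c_def)
  have vc: "v = U *\<^sub>v c"
    using assoc_mult_mat_vec[OF Uc Ua v] UU' v by (simp add: c_def)
  have lhs: "U * diag_matrix n f * mat_adjoint U *\<^sub>v v = U *\<^sub>v (diag_matrix n f *\<^sub>v c)"
    using assoc_mult_mat_vec[OF mult_carrier_mat[OF Uc diag_matrix_carrier] Ua v]
      assoc_mult_mat_vec[OF Uc diag_matrix_carrier c] by (simp add: c_def)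
  have rhs: "w \<cdot>\<^sub>v v = U *\<^sub>v (w \<cdot>\<^sub>v c)"
    using mult_mat_vec[OF Uc c] vc by simp
  have cancel: "x = y" if "U *\<^sub>v x = U *\<^sub>v y" "x \<in> carrier_vec n" "y \<in> carrier_vec n" for x y
    using that assoc_mult_mat_vec[OF Ua Uc, of x] assoc_mult_mat_vec[OF Ua Uc, of y] UU by simp
  have diag_c: "diag_matrix n f *\<^sub>v c = vec n (\<lambda>k. f k * c $ k)"
  proof (rule eq_vecI)
    fix k assume "k < dim_vec (vec n (\<lambda>k. f k * c $ k))"
    hence k: "k < n" by simp
    have "(diag_matrix n f *\<^sub>v c) $ k = (\<Sum>b<n. if b = k then f k * c $ b else 0)"
      unfolding index_mult_mat_vec_sum[OF diag_matrix_carrier c k]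
      using k by (intro sum.cong) (auto simp: diag_matrix_def)
    thus "(diag_matrix n f *\<^sub>v c) $ k = vec n (\<lambda>k. f k * c $ k) $ k" using k by simp
  qed (simp add: diag_matrix_def)
  have "U * diag_matrix n f * mat_adjoint U *\<^sub>v v = w \<cdot>\<^sub>v v \<longleftrightarrow> diag_matrix n f *\<^sub>v c = w \<cdot>\<^sub>v c"
    unfolding lhs rhs
    using cancel[OF _ mult_mat_vec_carrier[OF diag_matrix_carrier c] smult_carrier_vec[THEN iffD2, OF c]] by auto
  also have "\<dots> \<longleftrightarrow> (\<forall>k<n. f k * c $ k = w * c $ k)"
    unfolding diag_c using c by (auto simp: vec_eq_iff)
  finally show ?thesis unfolding c_def .
qed

section \<open>The spectral theorem for Hermitian matrices\<close>

lemma cscalar_prod_self: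
  fixes x :: "complex vec"
  shows "x \<bullet>c x = complex_of_real (\<Sum>i<dim_vec x. (cmod (x $ i))\<^sup>2)"
  by (simp add: scalar_prod_def lessThan_atLeast0 cinner_self)

lemma unitary_of_corthogonal:
  assumes wsc: "set ws \<subseteq> carrier_vec n" and orth: "corthogonal ws" and len_ws: "length ws = n"
  defines "c \<equiv> \<lambda>k. complex_of_real (1 / sqrt (Re (ws ! k \<bullet>c ws ! k)))"
  shows "unitary_mat n (mat n n (\<lambda>(a,k). c k * ws ! k $ a))"
proof (rule unitary_matI)
  define W where "W = mat n n (\<lambda>(a,k). c k * ws ! k $ a)"
  define r where "r k = Re (ws ! k \<bullet>c ws ! k)" for k
  have wsk: "ws ! k \<in> carrier_vec n" if "k < n" for k using wsc len_ws that by auto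
  have rpos: "r k > 0" and rr: "ws ! k \<bullet>c ws ! k = complex_of_real (r k)" if k: "k < n" for k
  proof -
    have nz: "ws ! k \<bullet>c ws ! k \<noteq> 0" using orth k len_ws unfolding corthogonal_def by auto
    show "ws ! k \<bullet>c ws ! k = complex_of_real (r k)" unfolding r_def cscalar_prod_self by simp
    have "(\<Sum>i<dim_vec (ws ! k). (cmod (ws ! k $ i))\<^sup>2) \<noteq> 0"
      using nz unfolding cscalar_prod_self by (metis of_real_0)
    moreover have "(\<Sum>i<dim_vec (ws ! k). (cmod (ws ! k $ i))\<^sup>2) \<ge> 0" by (intro sum_nonneg) auto
    ultimately show "r k > 0" unfolding r_def cscalar_prod_self by simp
  qed
  have W: "W \<in> carrier_mat n n" unfolding W_def by simp
  show "mat n n (\<lambda>(a,k). c k * ws ! k $ a) \<in> carrier_mat n n" by simp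
  show "mat_adjoint (mat n n (\<lambda>(a,k). c k * ws ! k $ a)) * mat n n (\<lambda>(a,k). c k * ws ! k $ a) = 1\<^sub>m n"
    unfolding W_def[symmetric]
  proof (rule eq_matI)
    fix k l assume "k < dim_row (1\<^sub>m n)" "l < dim_col (1\<^sub>m n)"
    hence k: "k < n" and l: "l < n" by auto
    have "(mat_adjoint W * W) $$ (k,l) = (\<Sum>a<n. c l * cnj (c k) * (ws ! l $ a * cnj (ws ! k $ a)))"
      unfolding index_mult_mat_sum[OF mat_adjoint_carrier[OF W] W k l]
      using W k l by (intro sum.cong refl) (simp add: W_def)
    also have "\<dots> = c l * cnj (c k) * (ws ! l \<bullet>c ws ! k)"
      using wsk[OF k] wsk[OF l] by (simp add: sum_distrib_left scalar_prod_def lessThan_atLeast0)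
    also have "\<dots> = 1\<^sub>m n $$ (k,l)"
    proof (cases "k = l")
      case True
      have "c k * cnj (c k) * complex_of_real (r k) = 1"
        using rpos[OF k] unfolding c_def r_def by (simp flip: of_real_mult)
      thus ?thesis using True rr[OF k] k by simp
    next
      case False
      hence "ws ! l \<bullet>c ws ! k = 0" using orth k l len_ws unfolding corthogonal_def by auto
      thus ?thesis using False k l by simp
    qed
    finally show "(mat_adjoint W * W) $$ (k,l) = 1\<^sub>m n $$ (k,l)" .
  qed (use W in auto)
qed

lemma unitary_completion:
  assumes v: "v \<in> carrier_vec n" and v0: "v \<noteq> 0\<^sub>v n"
  shows "\<exists>W c. unitary_mat n W \<and> (\<forall>a<n. W $$ (a,0) = c * v $ a)"
proof -
  have n0: "0 < n"
  proof (rule ccontr)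
    assume "\<not> 0 < n"
    hence "v = 0\<^sub>v n" using v by (intro eq_vecI) auto
    thus False using v0 by simp
  qed
  interpret cof_vec_space n "TYPE(complex)" .
  define b where "b = basis_completion v"
  from basis_completion[OF v v0, folded b_def]
  have dist_b: "distinct b" and indep: "\<not> lin_dep (set b)" and bc: "set b \<subseteq> carrier_vec n"
    and hdb: "hd b = v" and len_b: "length b = n" by auto
  from hdb len_b n0 obtain vs where bv: "b = v # vs" by (cases b) auto
  define ws where "ws = gram_schmidt n b"
  from gram_schmidt_result[OF bc dist_b indep ws_def]
  have wsc: "set ws \<subseteq> carrier_vec n" and orth: "corthogonal ws" and len_ws: "length ws = n"
    by (auto simp: len_b)
  have ws0: "ws ! 0 = v"
    using gram_schmidt_hd[OF v, of vs] len_ws n0 unfolding ws_def bv by (cases "gram_schmidt n (v # vs)") auto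
  define c where "c k = complex_of_real (1 / sqrt (Re (ws ! k \<bullet>c ws ! k)))" for k
  have "unitary_mat n (mat n n (\<lambda>(a,k). c k * ws ! k $ a))"
    unfolding c_def by (rule unitary_of_corthogonal[OF wsc orth len_ws])
  moreover have "\<forall>a<n. mat n n (\<lambda>(a,k). c k * ws ! k $ a) $$ (a,0) = c 0 * v $ a" using n0 ws0 by simp
  ultimately show ?thesis by blast
qed

definition one_direct_sum :: "complex mat \<Rightarrow> complex mat" where
  "one_direct_sum U = mat (Suc (dim_row U)) (Suc (dim_col U))
     (\<lambda>(i,j). if i = 0 \<or> j = 0 then (if i = j then 1 else 0) else U $$ (i - 1, j - 1))"

lemma one_direct_sum_carrier: "U \<in> carrier_mat n n \<Longrightarrow> one_direct_sum U \<in> carrier_mat (Suc n) (Suc n)"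
  by (simp add: one_direct_sum_def)

lemma unitary_one_direct_sum:
  assumes U: "unitary_mat n U"
  shows "unitary_mat (Suc n) (one_direct_sum U)"
proof (rule unitary_matI)
  have Uc: "U \<in> carrier_mat n n" using U by (simp add: unitary_mat_def)
  let ?V = "one_direct_sum U"
  have V: "?V \<in> carrier_mat (Suc n) (Suc n)" using Uc by (rule one_direct_sum_carrier)
  show "?V \<in> carrier_mat (Suc n) (Suc n)" by (fact V)
  show "mat_adjoint ?V * ?V = 1\<^sub>m (Suc n)"
  proof (rule eq_matI)
    fix i j assume "i < dim_row (1\<^sub>m (Suc n))" "j < dim_col (1\<^sub>m (Suc n))"
    hence i: "i < Suc n" and j: "j < Suc n" by auto
    have "(mat_adjoint ?V * ?V) $$ (i,j) = (\<Sum>k<Suc n. cnj (?V $$ (k,i)) * ?V $$ (k,j))"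
      unfolding index_mult_mat_sum[OF mat_adjoint_carrier[OF V] V i j]
      using V i j by (intro sum.cong) auto
    also have "\<dots> = cnj (?V $$ (0,i)) * ?V $$ (0,j) + (\<Sum>k<n. cnj (?V $$ (Suc k,i)) * ?V $$ (Suc k,j))"
      by (rule sum.lessThan_Suc_shift)
    also have "\<dots> = 1\<^sub>m (Suc n) $$ (i,j)"
    proof (cases "i = 0 \<or> j = 0")
      case True
      then show ?thesis using i j Uc by (auto simp: one_direct_sum_def)
    next
      case False
      then obtain i' j' where ij: "i = Suc i'" "j = Suc j'" by (meson not0_implies_Suc)
      have "(\<Sum>k<n. cnj (?V $$ (Suc k,i)) * ?V $$ (Suc k,j)) = (\<Sum>k<n. cnj (U $$ (k,i')) * U $$ (k,j'))"
        using i j ij Uc by (intro sum.cong refl) (auto simp: one_direct_sum_def)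
      also have "\<dots> = (if i' = j' then 1 else 0)"
        using i j ij by (intro unitary_col_cinner[OF U]) auto
      finally show ?thesis using i j ij Uc by (simp add: one_direct_sum_def)
    qed
    finally show "(mat_adjoint ?V * ?V) $$ (i,j) = 1\<^sub>m (Suc n) $$ (i,j)" .
  qed (use V in auto)
qed

lemma index_one_direct_sum_conj_diag:
  assumes U: "U \<in> carrier_mat n n" and i: "i < Suc n" and j: "j < Suc n"
  shows "(one_direct_sum U * diag_matrix (Suc n) (\<lambda>k. if k = 0 then c else f (k - 1))
      * mat_adjoint (one_direct_sum U)) $$ (i,j)
    = (if i = 0 \<or> j = 0 then (if i = j then c else 0)
       else (U * diag_matrix n f * mat_adjoint U) $$ (i - 1, j - 1))"
proof -
  let ?V = "one_direct_sum U"
  let ?g = "\<lambda>k. if k = 0 then c else f (k - 1)"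
  have "(?V * diag_matrix (Suc n) ?g * mat_adjoint ?V) $$ (i,j)
      = ?V $$ (i,0) * c * cnj (?V $$ (j,0)) + (\<Sum>k<n. ?V $$ (i,Suc k) * f k * cnj (?V $$ (j,Suc k)))"
    unfolding index_conj_diag_matrix[OF one_direct_sum_carrier[OF U] i j] sum.lessThan_Suc_shift
    by simp
  also have "\<dots> = (if i = 0 \<or> j = 0 then (if i = j then c else 0)
       else (U * diag_matrix n f * mat_adjoint U) $$ (i - 1, j - 1))"
  proof (cases "i = 0 \<or> j = 0")
    case True
    then show ?thesis using i j U by (auto simp: one_direct_sum_def)
  next
    case False
    then obtain i' j' where ij: "i = Suc i'" "j = Suc j'" by (meson not0_implies_Suc)
    have "(\<Sum>k<n. ?V $$ (i,Suc k) * f k * cnj (?V $$ (j,Suc k)))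
        = (\<Sum>k<n. U $$ (i',k) * f k * cnj (U $$ (j',k)))"
      using i j ij U by (intro sum.cong refl) (auto simp: one_direct_sum_def)
    also have "\<dots> = (U * diag_matrix n f * mat_adjoint U) $$ (i', j')"
      using i j ij by (intro index_conj_diag_matrix[OF U, symmetric]) auto
    finally show ?thesis using i j ij U by (simp add: one_direct_sum_def)
  qed
  finally show ?thesis .
qed

lemma eigenvalue_exists:
  fixes A :: "complex mat"
  assumes A: "A \<in> carrier_mat (Suc n) (Suc n)"
  shows "\<exists>e. eigenvalue A e"
proof -
  from char_poly_factorized[OF A] obtain as where cp: "char_poly A = (\<Prod>a\<leftarrow>as. [:- a, 1:])" by auto
  have "degree (char_poly A) = Suc n" using degree_monic_char_poly[OF A] by simp
  then obtain e rest where "as = e # rest" using cp by (cases as) auto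
  hence "poly (char_poly A) e = 0" unfolding cp by simp
  thus ?thesis using eigenvalue_root_char_poly[OF A] by blast
qed

lemma unitary_conj_conj_diag:
  assumes W: "unitary_mat n W" and U: "U \<in> carrier_mat n n"
  shows "W * (U * diag_matrix n f * mat_adjoint U) * mat_adjoint W
    = (W * U) * diag_matrix n f * mat_adjoint (W * U)"
proof -
  have Wc: "W \<in> carrier_mat n n" using W by (simp add: unitary_mat_def)
  show ?thesis
    using Wc U by (simp add: mat_adjoint_mult[OF Wc U] assoc_mult_mat[of _ n n _ n _ n]
        mult_carrier_mat[of _ n n _ n])
qed

lemma unitary_conj_cancel:
  assumes W: "unitary_mat n W" and A: "A \<in> carrier_mat n n"
  shows "W * (mat_adjoint W * (A * W)) * mat_adjoint W = A"
proof -
  have Wc: "W \<in> carrier_mat n n" using W by (simp add: unitary_mat_def)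
  show ?thesis
    using A Wc W
    by (simp add: unitary_mat_def assoc_mult_mat[of _ n n _ n _ n]
        assoc_mult_mat[symmetric, of W n n "mat_adjoint W" n _ n])
qed

lemma hermitian_entry:
  assumes "A \<in> carrier_mat n n" and "mat_adjoint A = A" and "i < n" and "j < n"
  shows "cnj (A $$ (j,i)) = A $$ (i,j)"
proof -
  have "mat_adjoint A $$ (i,j) = cnj (A $$ (j,i))" using assms(1,3,4) by simp
  thus ?thesis unfolding assms(2) by simp
qed

lemma unitary_conj_first_column:
  assumes A: "A \<in> carrier_mat n n" and W: "unitary_mat n W" and n: "0 < n"
    and v: "v \<in> carrier_vec n" and Av: "A *\<^sub>v v = e \<cdot>\<^sub>v v" and Wv: "\<forall>a<n. W $$ (a,0) = c * v $ a"
    and k: "k < n"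
  shows "(mat_adjoint W * (A * W)) $$ (k,0) = (if k = 0 then e else 0)"
proof -
  have Wc: "W \<in> carrier_mat n n" using W by (simp add: unitary_mat_def)
  have AW0: "(A * W) $$ (a,0) = e * W $$ (a,0)" if a: "a < n" for a
  proof -
    have "(A * W) $$ (a,0) = c * (\<Sum>b<n. A $$ (a,b) * v $ b)"
      unfolding index_mult_mat_sum[OF A Wc a n] by (simp add: Wv sum_distrib_left ac_simps)
    also have "\<dots> = c * (e * v $ a)"
      using index_mult_mat_vec_sum[OF A v a] Av v a by simp
    finally show ?thesis using a by (simp add: Wv)
  qed
  have "(mat_adjoint W * (A * W)) $$ (k,0) = e * (mat_adjoint W * W) $$ (k,0)"
    unfolding index_mult_mat_sum[OF mat_adjoint_carrier[OF Wc] mult_carrier_mat[OF A Wc] k n]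
      index_mult_mat_sum[OF mat_adjoint_carrier[OF Wc] Wc k n]
    by (simp add: AW0 sum_distrib_left ac_simps)
  thus ?thesis using W k by (simp add: unitary_mat_def)
qed

text \<open>Hermitian symmetry turns the first column \<open>e\<cdot>e\<^sub>0\<close> into the first row as well, and makes \<open>e\<close> real.\<close>
lemma hermitian_first_column_decomposition:
  assumes A: "A \<in> carrier_mat (Suc n) (Suc n)" and herm: "mat_adjoint A = A"
    and col: "\<And>k. k < Suc n \<Longrightarrow> A $$ (k,0) = (if k = 0 then e else 0)"
    and U: "U \<in> carrier_mat n n"
    and lower: "mat n n (\<lambda>(i,j). A $$ (Suc i, Suc j)) = U * diag_matrix n (\<lambda>i. complex_of_real (\<mu> i)) * mat_adjoint U"
  shows "A = one_direct_sum U * diag_matrix (Suc n) (\<lambda>i. complex_of_real (if i = 0 then Re e else \<mu> (i - 1)))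
      * mat_adjoint (one_direct_sum U)"
proof (rule eq_matI)
  have row: "A $$ (0,k) = (if k = 0 then cnj e else 0)" if "k < Suc n" for k
    using col[OF that] hermitian_entry[OF A herm zero_less_Suc that] by auto
  have e_real: "e = complex_of_real (Re e)"
    using col[of 0] row[of 0] by (simp add: complex_eq_iff)
  have diag: "(\<lambda>i. complex_of_real (if i = 0 then Re e else \<mu> (i - 1)))
      = (\<lambda>k. if k = 0 then complex_of_real (Re e) else complex_of_real (\<mu> (k - 1)))"
    by auto
  fix i j
  assume "i < dim_row (one_direct_sum U * diag_matrix (Suc n) (\<lambda>i. complex_of_real (if i = 0 then Re e else \<mu> (i - 1)))
      * mat_adjoint (one_direct_sum U))"
    and "j < dim_col (one_direct_sum U * diag_matrix (Suc n) (\<lambda>i. complex_of_real (if i = 0 then Re e else \<mu> (i - 1)))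
      * mat_adjoint (one_direct_sum U))"
  hence i: "i < Suc n" and j: "j < Suc n" using U by (auto simp: one_direct_sum_def)
  show "A $$ (i,j) = (one_direct_sum U * diag_matrix (Suc n) (\<lambda>i. complex_of_real (if i = 0 then Re e else \<mu> (i - 1)))
      * mat_adjoint (one_direct_sum U)) $$ (i,j)"
    unfolding diag index_one_direct_sum_conj_diag[OF U i j, of _ "\<lambda>k. complex_of_real (\<mu> k)"] lower[symmetric]
    using i j col row e_real by (cases i; cases j) auto
qed (use A U in \<open>auto simp: one_direct_sum_def\<close>)

text \<open>Induction on the dimension: conjugating by a unitary whose first column is an eigenvector
  splits off a \<open>1 \<times> 1\<close> block.\<close>
theorem hermitian_spectral_decomposition:
  fixes A :: "complex mat"
  assumes "A \<in> carrier_mat n n" and "mat_adjoint A = A"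
  shows "\<exists>U (\<mu>::nat \<Rightarrow> real). unitary_mat n U \<and> A = U * diag_matrix n (\<lambda>i. complex_of_real (\<mu> i)) * mat_adjoint U"
  using assms
proof (induction n arbitrary: A)
  case 0
  have "unitary_mat 0 (1\<^sub>m 0)" by (simp add: unitary_mat_def mat_adjoint_one)
  moreover have "A = 1\<^sub>m 0 * diag_matrix 0 (\<lambda>i. complex_of_real 0) * mat_adjoint (1\<^sub>m 0)"
    using 0 by (intro eq_matI) auto
  ultimately show ?case by (intro exI[of _ "1\<^sub>m 0"] exI[of _ "\<lambda>_. 0"] conjI) simp_all
next
  case (Suc n)
  have A: "A \<in> carrier_mat (Suc n) (Suc n)" and herm: "mat_adjoint A = A" using Suc.prems by auto
  obtain e where e: "eigenvalue A e" using eigenvalue_exists[OF A] by auto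
  define v where "v = find_eigenvector A e"
  have v: "v \<in> carrier_vec (Suc n)" and v0: "v \<noteq> 0\<^sub>v (Suc n)" and Av: "A *\<^sub>v v = e \<cdot>\<^sub>v v"
    using find_eigenvector[OF A e] A unfolding v_def eigenvector_def by auto
  obtain W c where W: "unitary_mat (Suc n) W" and Wv: "\<forall>a<Suc n. W $$ (a,0) = c * v $ a"
    using unitary_completion[OF v v0] by blast
  have Wc: "W \<in> carrier_mat (Suc n) (Suc n)" using W by (simp add: unitary_mat_def)
  define A' where "A' = mat_adjoint W * (A * W)"
  have A': "A' \<in> carrier_mat (Suc n) (Suc n)"
    unfolding A'_def by (metis A Wc mat_adjoint_carrier mult_carrier_mat)
  have A'herm: "mat_adjoint A' = A'"
    unfolding A'_def using A Wc herm
    by (simp add: mat_adjoint_mult[of _ "Suc n" "Suc n" _ "Suc n"] assoc_mult_mat[of _ "Suc n" "Suc n" _ "Suc n" _ "Suc n"])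
  have "mat_adjoint (mat n n (\<lambda>(i,j). A' $$ (Suc i, Suc j))) = mat n n (\<lambda>(i,j). A' $$ (Suc i, Suc j))"
    by (intro eq_matI) (auto simp: hermitian_entry[OF A' A'herm])
  then obtain U \<mu> where U: "unitary_mat n U"
    and lower: "mat n n (\<lambda>(i,j). A' $$ (Suc i, Suc j)) = U * diag_matrix n (\<lambda>i. complex_of_real (\<mu> i)) * mat_adjoint U"
    using Suc.IH[of "mat n n (\<lambda>(i,j). A' $$ (Suc i, Suc j))"] by auto
  have Uc: "U \<in> carrier_mat n n" using U by (simp add: unitary_mat_def)
  let ?D = "diag_matrix (Suc n) (\<lambda>i. complex_of_real (if i = 0 then Re e else \<mu> (i - 1)))"
  have "A = W * A' * mat_adjoint W"
    unfolding A'_def by (rule unitary_conj_cancel[OF W A, symmetric])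
  also have "A' = one_direct_sum U * ?D * mat_adjoint (one_direct_sum U)"
    using hermitian_first_column_decomposition[OF A' A'herm _ Uc lower]
      unitary_conj_first_column[OF A W zero_less_Suc v Av Wv] by (simp add: A'_def)
  also have "W * (one_direct_sum U * ?D * mat_adjoint (one_direct_sum U)) * mat_adjoint W
      = (W * one_direct_sum U) * ?D * mat_adjoint (W * one_direct_sum U)"
    by (rule unitary_conj_conj_diag[OF W one_direct_sum_carrier[OF Uc]])
  finally show ?case
    using unitary_mat_mult[OF W unitary_one_direct_sum[OF U]]
    by (intro exI[of _ "W * one_direct_sum U"] exI[of _ "\<lambda>i. if i = 0 then Re e else \<mu> (i - 1)"] conjI) simp_all
qed

section \<open>Kronecker products, matrix units and sums of matrices\<close>

lemma sum_lessThan_add: "(\<Sum>k<m+b. f k) = (\<Sum>k<m. f k) + (\<Sum>k<b. f (m+k))"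
  for f :: "nat \<Rightarrow> 'a::comm_monoid_add"
  by (induction b) (simp_all add: add.assoc)

lemma sum_lessThan_mult: "(\<Sum>k<a*b. f k) = (\<Sum>k1<a. \<Sum>k2<b. f (k1*b + k2))"
  for f :: "nat \<Rightarrow> 'a::comm_monoid_add"
proof (induction a)
  case 0 then show ?case by simp
next
  case (Suc a)
  have "(\<Sum>k<Suc a * b. f k) = (\<Sum>k<a*b + b. f k)" by (simp add: add.commute)
  also have "\<dots> = (\<Sum>k<a*b. f k) + (\<Sum>k<b. f (a*b+k))" by (rule sum_lessThan_add)
  finally show ?case using Suc.IH by simp
qed

lemma div_mod_mult_add:
  fixes k1 k2 b :: nat
  assumes "k2 < b"
  shows "(k1*b + k2) div b = k1" "(k1*b + k2) mod b = k2"
  using assms by auto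

lemma mult_add_less_mult:
  fixes k1 k2 a b :: nat
  assumes "k1 < a" "k2 < b"
  shows "k1*b + k2 < a*b"
proof -
  have "(k1+1)*b \<le> a*b" using assms(1) by (intro mult_le_mono1) simp
  thus ?thesis using assms(2) by simp
qed

lemma dim_kron[simp]: "dim_row (kron A B) = dim_row A * dim_row B" "dim_col (kron A B) = dim_col A * dim_col B"
  by (simp_all add: kron_def)

lemma kron_carrier: "A \<in> carrier_mat a1 a2 \<Longrightarrow> B \<in> carrier_mat b1 b2 \<Longrightarrow> kron A B \<in> carrier_mat (a1*b1) (a2*b2)"
  by (metis carrier_matD(1) carrier_matD(2) carrier_matI dim_kron(1) dim_kron(2))

lemma index_kron:
  assumes "i < dim_row A * dim_row B" "j < dim_col A * dim_col B"
  shows "kron A B $$ (i,j) = A $$ (i div dim_row B, j div dim_col B) * B $$ (i mod dim_row B, j mod dim_col B)"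
  using assms by (simp add: kron_def)

lemma index_kron_mult_add:
  assumes "k1 < dim_row A" "k2 < dim_row B" "l1 < dim_col A" "l2 < dim_col B"
  shows "kron A B $$ (k1 * dim_row B + k2, l1 * dim_col B + l2) = A $$ (k1,l1) * B $$ (k2,l2)"
proof -
  have "k1 * dim_row B + k2 < dim_row A * dim_row B" using mult_add_less_mult assms by blast
  moreover have "l1 * dim_col B + l2 < dim_col A * dim_col B" using mult_add_less_mult assms by blast
  ultimately show ?thesis using assms by (simp add: index_kron div_mod_mult_add)
qed

lemma kron_mult_mix:
  assumes A: "A \<in> carrier_mat ra ca" and B: "B \<in> carrier_mat rb cb"
    and C: "C \<in> carrier_mat ca cc" and D: "D \<in> carrier_mat cb cd"
  shows "kron A B * kron C D = kron (A * C) (B * D)"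
proof (rule eq_matI)
  fix i j assume "i < dim_row (kron (A * C) (B * D))" "j < dim_col (kron (A * C) (B * D))"
  hence i: "i < ra * rb" and j: "j < cc * cd" using A B C D by auto
  have rb: "rb > 0" using i by (cases rb) auto
  have cd: "cd > 0" using j by (cases cd) auto
  have i1: "i div rb < ra" using i rb by (simp add: less_mult_imp_div_less)
  have i2: "i mod rb < rb" using rb by simp
  have j1: "j div cd < cc" using j cd by (simp add: less_mult_imp_div_less)
  have j2: "j mod cd < cd" using cd by simp
  have "(kron A B * kron C D) $$ (i,j) = (\<Sum>k<ca*cb. kron A B $$ (i,k) * kron C D $$ (k,j))"
    by (rule index_mult_mat_sum[OF kron_carrier[OF A B] kron_carrier[OF C D] i j])
  also have "\<dots> = (\<Sum>k1<ca. \<Sum>k2<cb. kron A B $$ (i,k1*cb+k2) * kron C D $$ (k1*cb+k2,j))"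
    by (rule sum_lessThan_mult)
  also have "\<dots> = (\<Sum>k1<ca. \<Sum>k2<cb. (A $$ (i div rb, k1) * C $$ (k1, j div cd)) * (B $$ (i mod rb, k2) * D $$ (k2, j mod cd)))"
  proof (intro sum.cong refl)
    fix k1 k2 assume k1: "k1 \<in> {..<ca}" and k2: "k2 \<in> {..<cb}"
    have b1: "k1*cb+k2 < ca*cb" using mult_add_less_mult k1 k2 by simp
    have "kron A B $$ (i,k1*cb+k2) = A $$ (i div rb, k1) * B $$ (i mod rb, k2)"
      using A B i b1 k2 by (simp add: index_kron div_mod_mult_add)
    moreover have "kron C D $$ (k1*cb+k2,j) = C $$ (k1, j div cd) * D $$ (k2, j mod cd)"
      using C D j b1 k2 by (simp add: index_kron div_mod_mult_add)
    ultimately show "kron A B $$ (i,k1*cb+k2) * kron C D $$ (k1*cb+k2,j)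
      = (A $$ (i div rb, k1) * C $$ (k1, j div cd)) * (B $$ (i mod rb, k2) * D $$ (k2, j mod cd))"
      by (simp add: ac_simps)
  qed
  also have "\<dots> = (\<Sum>k1<ca. A $$ (i div rb, k1) * C $$ (k1, j div cd)) * (\<Sum>k2<cb. B $$ (i mod rb, k2) * D $$ (k2, j mod cd))"
    by (simp add: sum_product)
  also have "\<dots> = (A * C) $$ (i div rb, j div cd) * (B * D) $$ (i mod rb, j mod cd)"
    using index_mult_mat_sum[OF A C i1 j1] index_mult_mat_sum[OF B D i2 j2] by simp
  also have "\<dots> = kron (A * C) (B * D) $$ (i,j)"
    using A B C D i j by (simp add: index_kron)
  finally show "(kron A B * kron C D) $$ (i,j) = kron (A * C) (B * D) $$ (i,j)" .
qed (use A B C D in auto)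

lemma trace_kron:
  assumes A: "A \<in> carrier_mat a a" and B: "B \<in> carrier_mat b b"
  shows "mtrace (kron A B) = mtrace A * mtrace B"
proof -
  have "mtrace (kron A B) = (\<Sum>k<a*b. kron A B $$ (k,k))" using A B by (simp add: mtrace_def)
  also have "\<dots> = (\<Sum>k1<a. \<Sum>k2<b. kron A B $$ (k1*b+k2,k1*b+k2))" by (rule sum_lessThan_mult)
  also have "\<dots> = (\<Sum>k1<a. \<Sum>k2<b. A $$ (k1,k1) * B $$ (k2,k2))"
  proof (intro sum.cong refl)
    fix k1 k2 assume "k1 \<in> {..<a}" "k2 \<in> {..<b}"
    thus "kron A B $$ (k1*b+k2,k1*b+k2) = A $$ (k1,k1) * B $$ (k2,k2)"
      using index_kron_mult_add[of k1 A k2 B k1 k2] A B by simp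
  qed
  also have "\<dots> = mtrace A * mtrace B" using A B by (simp add: mtrace_def sum_product)
  finally show ?thesis .
qed

lemma mat_adjoint_kron: "mat_adjoint (kron A B) = kron (mat_adjoint A) (mat_adjoint B)"
proof (rule eq_matI)
  fix i j assume "i < dim_row (kron (mat_adjoint A) (mat_adjoint B))" "j < dim_col (kron (mat_adjoint A) (mat_adjoint B))"
  hence i: "i < dim_col A * dim_col B" and j: "j < dim_row A * dim_row B" by auto
  have cb: "dim_col B > 0" using i by (cases "dim_col B") auto
  have rb: "dim_row B > 0" using j by (cases "dim_row B") auto
  have i1: "i div dim_col B < dim_col A" using i cb by (simp add: less_mult_imp_div_less)
  have j1: "j div dim_row B < dim_row A" using j rb by (simp add: less_mult_imp_div_less)
  show "mat_adjoint (kron A B) $$ (i,j) = kron (mat_adjoint A) (mat_adjoint B) $$ (i,j)"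
    using i j i1 j1 cb rb by (simp add: index_kron)
qed auto

fun kron_prod :: "(nat \<Rightarrow> complex mat) \<Rightarrow> nat \<Rightarrow> complex mat" where
  "kron_prod f 0 = 1\<^sub>m 1"
| "kron_prod f (Suc n) = kron (kron_prod f n) (f n)"

lemma kpow_eq_kron_prod: "kpow A n = kron_prod (\<lambda>_. A) n"
  by (induction n) auto

lemma kron_prod_carrier: "(\<And>t. t < n \<Longrightarrow> f t \<in> carrier_mat d d) \<Longrightarrow> kron_prod f n \<in> carrier_mat (d^n) (d^n)"
proof (induction n)
  case 0 then show ?case by simp
next
  case (Suc n)
  have "kron_prod f n \<in> carrier_mat (d^n) (d^n)" using Suc by auto
  moreover have "f n \<in> carrier_mat d d" using Suc by auto
  ultimately have "kron (kron_prod f n) (f n) \<in> carrier_mat (d^n*d) (d^n*d)" by (rule kron_carrier)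
  thus ?case by (simp add: mult.commute)
qed

lemma kron_prod_mult:
  assumes "\<And>t. t < n \<Longrightarrow> f t \<in> carrier_mat d d" "\<And>t. t < n \<Longrightarrow> g t \<in> carrier_mat d d"
  shows "kron_prod f n * kron_prod g n = kron_prod (\<lambda>t. f t * g t) n"
  using assms
proof (induction n)
  case 0 then show ?case by simp
next
  case (Suc n)
  have f: "kron_prod f n \<in> carrier_mat (d^n) (d^n)" using Suc.prems by (intro kron_prod_carrier) auto
  have g: "kron_prod g n \<in> carrier_mat (d^n) (d^n)" using Suc.prems by (intro kron_prod_carrier) auto
  have "kron_prod f (Suc n) * kron_prod g (Suc n) = kron (kron_prod f n * kron_prod g n) (f n * g n)"
    using kron_mult_mix[OF f _ g, of "f n" d d "g n" d] Suc.prems by simp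
  thus ?case using Suc by simp
qed

lemma trace_kron_prod:
  assumes "\<And>t. t < n \<Longrightarrow> f t \<in> carrier_mat d d"
  shows "mtrace (kron_prod f n) = (\<Prod>t<n. mtrace (f t))"
  using assms
proof (induction n)
  case 0 then show ?case by (simp add: mtrace_def)
next
  case (Suc n)
  have f: "kron_prod f n \<in> carrier_mat (d^n) (d^n)" using Suc.prems by (intro kron_prod_carrier) auto
  show ?case using trace_kron[OF f, of "f n" d] Suc by simp
qed

lemma mat_adjoint_kron_prod: "mat_adjoint (kron_prod f n) = kron_prod (\<lambda>t. mat_adjoint (f t)) n"
proof (induction n)
  case 0
  show ?case by (rule eq_matI) auto
next
  case (Suc n) then show ?case by (simp add: mat_adjoint_kron)
qed

definition mat_unit :: "nat \<Rightarrow> nat \<Rightarrow> nat \<Rightarrow> complex mat" where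
  "mat_unit d x y = mat d d (\<lambda>(a,b). if a = x \<and> b = y then 1 else 0)"

lemma mat_unit_carrier[simp]: "mat_unit d x y \<in> carrier_mat d d" by (simp add: mat_unit_def)
lemma dim_mat_unit[simp]: "dim_row (mat_unit d x y) = d" "dim_col (mat_unit d x y) = d" by (simp_all add: mat_unit_def)

lemma trace_mat_unit_mult:
  assumes M: "M \<in> carrier_mat d d" and x: "x < d" and y: "y < d"
  shows "mtrace (mat_unit d x y * M) = M $$ (y,x)"
proof -
  have "mtrace (mat_unit d x y * M) = (\<Sum>a<d. (mat_unit d x y * M) $$ (a,a))" using M by (simp add: mtrace_def)
  also have "\<dots> = (\<Sum>a<d. if a = x then M $$ (y,a) else 0)"
  proof (intro sum.cong refl)
    fix a assume a: "a \<in> {..<d}"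
    have "(mat_unit d x y * M) $$ (a,a) = (\<Sum>b<d. mat_unit d x y $$ (a,b) * M $$ (b,a))"
      using a by (intro index_mult_mat_sum[OF mat_unit_carrier M]) auto
    also have "\<dots> = (\<Sum>b<d. if b = y then (if a = x then M $$ (y,a) else 0) else 0)"
      using a by (intro sum.cong refl) (auto simp: mat_unit_def)
    also have "\<dots> = (if a = x then M $$ (y,a) else 0)" using y by simp
    finally show "(mat_unit d x y * M) $$ (a,a) = (if a = x then M $$ (y,a) else 0)" .
  qed
  also have "\<dots> = M $$ (y,x)" using x by simp
  finally show ?thesis .
qed

lemma mat_unit_mult:
  assumes "x < d" "y < d" "z < d" "w < d"
  shows "mat_unit d x y * mat_unit d z w = (if y = z then mat_unit d x w else 0\<^sub>m d d)"
proof (rule eq_matI)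
  fix a b assume "a < dim_row (if y = z then mat_unit d x w else 0\<^sub>m d d)" "b < dim_col (if y = z then mat_unit d x w else 0\<^sub>m d d)"
  hence a: "a < d" and b: "b < d" by (auto split: if_splits simp: mat_unit_def)
  have "(mat_unit d x y * mat_unit d z w) $$ (a,b) = (\<Sum>k<d. mat_unit d x y $$ (a,k) * mat_unit d z w $$ (k,b))"
    using a b by (intro index_mult_mat_sum[OF mat_unit_carrier mat_unit_carrier]) auto
  also have "\<dots> = (\<Sum>k<d. if k = y then (if a = x \<and> y = z \<and> b = w then 1 else 0) else 0)"
    using a b by (intro sum.cong refl) (auto simp: mat_unit_def)
  also have "\<dots> = (if a = x \<and> y = z \<and> b = w then 1 else 0)" using assms by simp
  also have "\<dots> = (if y = z then mat_unit d x w else 0\<^sub>m d d) $$ (a,b)" using a b by (auto simp: mat_unit_def)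
  finally show "(mat_unit d x y * mat_unit d z w) $$ (a,b) = (if y = z then mat_unit d x w else 0\<^sub>m d d) $$ (a,b)" .
qed (auto simp: mat_unit_def)

lemma mat_adjoint_mat_unit: "mat_adjoint (mat_unit d x y) = mat_unit d y x"
  by (rule eq_matI) (auto simp: mat_unit_def)

lemma trace_zero_mat: "mtrace (0\<^sub>m d d) = 0" by (simp add: mtrace_def)

definition mat_sum :: "nat \<Rightarrow> ('i \<Rightarrow> complex mat) \<Rightarrow> 'i set \<Rightarrow> complex mat" where
  "mat_sum N F S = mat N N (\<lambda>(a,b). \<Sum>s\<in>S. F s $$ (a,b))"

lemma mat_sum_carrier[simp]: "mat_sum N F S \<in> carrier_mat N N" by (simp add: mat_sum_def)
lemma dim_mat_sum[simp]: "dim_row (mat_sum N F S) = N" "dim_col (mat_sum N F S) = N" by (simp_all add: mat_sum_def)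

lemma mat_sum_mult_left:
  assumes A: "A \<in> carrier_mat N N" and F: "\<And>s. s \<in> S \<Longrightarrow> F s \<in> carrier_mat N N"
  shows "A * mat_sum N F S = mat_sum N (\<lambda>s. A * F s) S"
proof (rule eq_matI)
  fix a b assume "a < dim_row (mat_sum N (\<lambda>s. A * F s) S)" "b < dim_col (mat_sum N (\<lambda>s. A * F s) S)"
  hence a: "a < N" and b: "b < N" by (auto simp: mat_sum_def)
  have "(A * mat_sum N F S) $$ (a,b) = (\<Sum>k<N. A $$ (a,k) * mat_sum N F S $$ (k,b))"
    using a b by (intro index_mult_mat_sum[OF A mat_sum_carrier]) auto
  also have "\<dots> = (\<Sum>k<N. \<Sum>s\<in>S. A $$ (a,k) * F s $$ (k,b))"
    using b by (intro sum.cong refl) (auto simp: mat_sum_def sum_distrib_left)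
  also have "\<dots> = (\<Sum>s\<in>S. \<Sum>k<N. A $$ (a,k) * F s $$ (k,b))" by (rule sum.swap)
  also have "\<dots> = (\<Sum>s\<in>S. (A * F s) $$ (a,b))"
    using a b by (intro sum.cong refl index_mult_mat_sum[OF A F, symmetric]) auto
  also have "\<dots> = mat_sum N (\<lambda>s. A * F s) S $$ (a,b)" using a b by (simp add: mat_sum_def)
  finally show "(A * mat_sum N F S) $$ (a,b) = mat_sum N (\<lambda>s. A * F s) S $$ (a,b)" .
qed (use A in \<open>auto simp: mat_sum_def\<close>)

lemma mat_sum_mult_right:
  assumes A: "A \<in> carrier_mat N N" and F: "\<And>s. s \<in> S \<Longrightarrow> F s \<in> carrier_mat N N"
  shows "mat_sum N F S * A = mat_sum N (\<lambda>s. F s * A) S"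
proof (rule eq_matI)
  fix a b assume "a < dim_row (mat_sum N (\<lambda>s. F s * A) S)" "b < dim_col (mat_sum N (\<lambda>s. F s * A) S)"
  hence a: "a < N" and b: "b < N" by (auto simp: mat_sum_def)
  have "(mat_sum N F S * A) $$ (a,b) = (\<Sum>k<N. mat_sum N F S $$ (a,k) * A $$ (k,b))"
    using a b by (intro index_mult_mat_sum[OF mat_sum_carrier A]) auto
  also have "\<dots> = (\<Sum>k<N. \<Sum>s\<in>S. F s $$ (a,k) * A $$ (k,b))"
    using a by (intro sum.cong refl) (auto simp: mat_sum_def sum_distrib_right)
  also have "\<dots> = (\<Sum>s\<in>S. \<Sum>k<N. F s $$ (a,k) * A $$ (k,b))" by (rule sum.swap)
  also have "\<dots> = (\<Sum>s\<in>S. (F s * A) $$ (a,b))"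
    using a b by (intro sum.cong refl index_mult_mat_sum[OF F A, symmetric]) auto
  also have "\<dots> = mat_sum N (\<lambda>s. F s * A) S $$ (a,b)" using a b by (simp add: mat_sum_def)
  finally show "(mat_sum N F S * A) $$ (a,b) = mat_sum N (\<lambda>s. F s * A) S $$ (a,b)" .
qed (use A in \<open>auto simp: mat_sum_def\<close>)

lemma trace_mat_sum:
  assumes F: "\<And>s. s \<in> S \<Longrightarrow> F s \<in> carrier_mat N N"
  shows "mtrace (mat_sum N F S) = (\<Sum>s\<in>S. mtrace (F s))"
proof -
  have "mtrace (mat_sum N F S) = (\<Sum>a<N. \<Sum>s\<in>S. F s $$ (a,a))" by (simp add: mtrace_def mat_sum_def)
  also have "\<dots> = (\<Sum>s\<in>S. \<Sum>a<N. F s $$ (a,a))" by (rule sum.swap)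
  also have "\<dots> = (\<Sum>s\<in>S. mtrace (F s))" using F by (intro sum.cong refl) (auto simp: mtrace_def)
  finally show ?thesis .
qed

lemma mat_adjoint_mat_sum:
  assumes F: "\<And>s. s \<in> S \<Longrightarrow> F s \<in> carrier_mat N N"
  shows "mat_adjoint (mat_sum N F S) = mat_sum N (\<lambda>s. mat_adjoint (F s)) S"
proof (rule eq_matI)
  fix a b assume "a < dim_row (mat_sum N (\<lambda>s. mat_adjoint (F s)) S)" "b < dim_col (mat_sum N (\<lambda>s. mat_adjoint (F s)) S)"
  hence a: "a < N" and b: "b < N" by (auto simp: mat_sum_def)
  show "mat_adjoint (mat_sum N F S) $$ (a,b) = mat_sum N (\<lambda>s. mat_adjoint (F s)) S $$ (a,b)"
  proof -
    have "mat_adjoint (mat_sum N F S) $$ (a,b) = (\<Sum>s\<in>S. cnj (F s $$ (b,a)))"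
      using a b by (simp add: mat_sum_def)
    also have "\<dots> = (\<Sum>s\<in>S. mat_adjoint (F s) $$ (a,b))"
    proof (intro sum.cong refl)
      fix s assume "s \<in> S"
      hence "F s \<in> carrier_mat N N" by (rule F)
      thus "cnj (F s $$ (b,a)) = mat_adjoint (F s) $$ (a,b)" using a b by simp
    qed
    finally show ?thesis using a b by (simp add: mat_sum_def)
  qed
qed (auto simp: mat_sum_def)

section \<open>The swap observable\<close>

definition slot_unit :: "nat \<Rightarrow> nat \<Rightarrow> nat \<Rightarrow> nat \<Rightarrow> nat \<Rightarrow> complex mat" where
  "slot_unit d i x y t = (if t = i then mat_unit d x y else 1\<^sub>m d)"

text \<open>Summing \<open>swap_term d n i x y\<close> over \<open>x, y < d\<close> gives the operator that swaps the \<open>i\<close>-th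
  tensor factor with the last one; \<open>swap_observable\<close> averages these \<open>n\<close> swaps.\<close>
definition swap_term :: "nat \<Rightarrow> nat \<Rightarrow> nat \<Rightarrow> nat \<Rightarrow> nat \<Rightarrow> complex mat" where
  "swap_term d n i x y = kron (kron_prod (slot_unit d i x y) n) (mat_unit d y x)"

definition swap_observable :: "nat \<Rightarrow> nat \<Rightarrow> complex mat" where
  "swap_observable d n = mat_sum (d^n*d) (\<lambda>(i,x,y). (1 / of_nat n) \<cdot>\<^sub>m swap_term d n i x y) ({..<n} \<times> {..<d} \<times> {..<d})"

definition probe_state :: "nat \<Rightarrow> complex mat \<Rightarrow> complex vec \<Rightarrow> complex mat" where
  "probe_state n \<rho> \<psi> = kron (kpow \<rho> n) (proj \<psi>)"

lemma slot_unit_carrier[simp]: "slot_unit d i x y t \<in> carrier_mat d d"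
  by (simp add: slot_unit_def)

lemma dim_slot_unit[simp]: "dim_row (slot_unit d i x y t) = d" "dim_col (slot_unit d i x y t) = d"
  by (simp_all add: slot_unit_def)

lemma swap_term_carrier[simp]: "swap_term d n i x y \<in> carrier_mat (d^n*d) (d^n*d)"
  unfolding swap_term_def by (intro kron_carrier kron_prod_carrier) auto

lemma proj_carrier: "\<psi> \<in> carrier_vec d \<Longrightarrow> proj \<psi> \<in> carrier_mat d d"
  by (simp add: proj_def carrier_vecD)

lemma probe_state_carrier:
  "\<rho> \<in> carrier_mat d d \<Longrightarrow> \<psi> \<in> carrier_vec d \<Longrightarrow> probe_state n \<rho> \<psi> \<in> carrier_mat (d^n*d) (d^n*d)"
  unfolding probe_state_def kpow_eq_kron_prod by (intro kron_carrier kron_prod_carrier proj_carrier) auto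

lemma swap_observable_carrier[simp]: "swap_observable d n \<in> carrier_mat (d^n*d) (d^n*d)" by (simp add: swap_observable_def)


lemma sum_if_eq_else: "i < n \<Longrightarrow> (\<Sum>j<n. if j = i then A else B) = A + (of_nat n - 1) * (B :: complex)"
proof -
  assume i: "i < n"
  have "(\<Sum>j<n. if j = i then A else B) = A + (\<Sum>j\<in>{..<n} - {i}. B)"
    using i by (simp add: sum.delta_remove)
  also have "(\<Sum>j\<in>{..<n} - {i}. B) = of_nat (n - 1) * B" using i by simp
  also have "of_nat (n - 1) = (of_nat n - 1 :: complex)" using i by (simp add: of_nat_diff)
  finally show ?thesis .
qed

lemma mat_adjoint_slot_unit: "mat_adjoint (slot_unit d i x y t) = slot_unit d i y x t"
  by (simp add: slot_unit_def mat_adjoint_mat_unit mat_adjoint_one)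

lemma mat_adjoint_swap_term: "mat_adjoint (swap_term d n i x y) = swap_term d n i y x"
  by (simp add: swap_term_def mat_adjoint_kron mat_adjoint_kron_prod mat_adjoint_slot_unit mat_adjoint_mat_unit)

lemma scaled_swap_term_carrier: "(case s of (i,x,y) \<Rightarrow> (1 / of_nat n) \<cdot>\<^sub>m swap_term d n i x y) \<in> carrier_mat (d^n*d) (d^n*d)"
  by (auto split: prod.splits)

lemma sum_triple: "(\<Sum>s\<in>{..<n} \<times> {..<d} \<times> {..<d}. f s) = (\<Sum>i<n. \<Sum>x<d. \<Sum>y<d. f (i,x,y))"
  by (simp add: sum.cartesian_product')

lemma swap_observable_hermitian: "mat_adjoint (swap_observable d n) = swap_observable d n"
proof -
  let ?F = "\<lambda>s. case s of (i,x,y) \<Rightarrow> (1 / of_nat n) \<cdot>\<^sub>m swap_term d n i x y"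
  let ?N = "d^n*d"
  let ?S = "{..<n} \<times> {..<d} \<times> {..<d}"
  have "mat_adjoint (swap_observable d n) = mat_sum ?N (\<lambda>s. mat_adjoint (?F s)) ?S"
    unfolding swap_observable_def by (rule mat_adjoint_mat_sum) (rule scaled_swap_term_carrier)
  also have "\<dots> = mat_sum ?N ?F ?S"
  proof (rule eq_matI)
    fix a b assume "a < dim_row (mat_sum ?N ?F ?S)" "b < dim_col (mat_sum ?N ?F ?S)"
    hence a: "a < ?N" and b: "b < ?N" by auto
    have "mat_sum ?N (\<lambda>s. mat_adjoint (?F s)) ?S $$ (a,b) = (\<Sum>s\<in>?S. mat_adjoint (?F s) $$ (a,b))"
      using a b by (simp add: mat_sum_def)
    also have "\<dots> = (\<Sum>i<n. \<Sum>x<d. \<Sum>y<d. mat_adjoint (?F (i,x,y)) $$ (a,b))" by (rule sum_triple)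
    also have "\<dots> = (\<Sum>i<n. \<Sum>x<d. \<Sum>y<d. ?F (i,y,x) $$ (a,b))"
      by (simp add: mat_adjoint_smult mat_adjoint_swap_term)
    also have "\<dots> = (\<Sum>i<n. \<Sum>x<d. \<Sum>y<d. ?F (i,x,y) $$ (a,b))"
      by (rule sum.cong[OF refl], rule sum.swap)
    also have "\<dots> = (\<Sum>s\<in>?S. ?F s $$ (a,b))" by (rule sum_triple[symmetric])
    also have "\<dots> = mat_sum ?N ?F ?S $$ (a,b)" using a b by (simp add: mat_sum_def)
    finally show "mat_sum ?N (\<lambda>s. mat_adjoint (?F s)) ?S $$ (a,b) = mat_sum ?N ?F ?S $$ (a,b)" .
  qed auto
  finally show ?thesis unfolding swap_observable_def .
qed

lemma swap_term_mult:
  "swap_term d n i x y * swap_term d n j z w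
    = kron (kron_prod (\<lambda>t. slot_unit d i x y t * slot_unit d j z w t) n) (mat_unit d y x * mat_unit d w z)"
proof -
  have c1: "kron_prod (slot_unit d i x y) n \<in> carrier_mat (d^n) (d^n)"
    and c2: "kron_prod (slot_unit d j z w) n \<in> carrier_mat (d^n) (d^n)"
    by (rule kron_prod_carrier, simp)+
  show ?thesis
    unfolding swap_term_def kron_mult_mix[OF c1 mat_unit_carrier c2 mat_unit_carrier]
    by (simp add: kron_prod_mult[where d=d])
qed

lemma trace_swap_observable_square:
  assumes X: "X \<in> carrier_mat (d^n*d) (d^n*d)"
  shows "mtrace (swap_observable d n * swap_observable d n * X)
    = 1 / of_nat n * (1 / of_nat n) * (\<Sum>i<n. \<Sum>x<d. \<Sum>y<d. \<Sum>j<n. \<Sum>z<d. \<Sum>w<d.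
        mtrace (swap_term d n i x y * swap_term d n j z w * X))"
proof -
  let ?F = "\<lambda>s. case s of (i,x,y) \<Rightarrow> (1 / of_nat n) \<cdot>\<^sub>m swap_term d n i x y"
  let ?N = "d^n*d"
  let ?S = "{..<n} \<times> {..<d} \<times> {..<d}"
  let ?c = "1 / (of_nat n :: complex)"
  have G: "?F t * X \<in> carrier_mat ?N ?N" for t by (rule mult_carrier_mat[OF scaled_swap_term_carrier X])
  have OX: "swap_observable d n * X = mat_sum ?N (\<lambda>t. ?F t * X) ?S"
    unfolding swap_observable_def by (subst mat_sum_mult_right[OF X]) (rule scaled_swap_term_carrier, rule refl)
  have "swap_observable d n * swap_observable d n * X = swap_observable d n * (swap_observable d n * X)"
    by (rule assoc_mult_mat[OF swap_observable_carrier swap_observable_carrier X])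
  also have "\<dots> = mat_sum ?N (\<lambda>s. mat_sum ?N (\<lambda>t. ?F s * (?F t * X)) ?S) ?S"
    unfolding OX unfolding swap_observable_def
    by (subst mat_sum_mult_right[OF mat_sum_carrier], rule scaled_swap_term_carrier, subst mat_sum_mult_left[OF scaled_swap_term_carrier G]) (rule refl)
  finally have "mtrace (swap_observable d n * swap_observable d n * X) = (\<Sum>s\<in>?S. \<Sum>t\<in>?S. mtrace (?F s * (?F t * X)))"
    by (simp add: trace_mat_sum mult_carrier_mat[OF scaled_swap_term_carrier G])
  moreover have "mtrace (?F (i,x,y) * (?F (j,z,w) * X)) = ?c * ?c * mtrace (swap_term d n i x y * swap_term d n j z w * X)"
    for i x y j z w
  proof -
    have K1: "swap_term d n j z w * X \<in> carrier_mat ?N ?N" by (rule mult_carrier_mat[OF swap_term_carrier X])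
    have "?F (i,x,y) * (?F (j,z,w) * X) = ?F (i,x,y) * (?c \<cdot>\<^sub>m (swap_term d n j z w * X))"
      using mult_smult_assoc_mat[OF swap_term_carrier X] by simp
    also have "\<dots> = ?c \<cdot>\<^sub>m (swap_term d n i x y * (?c \<cdot>\<^sub>m (swap_term d n j z w * X)))"
      using mult_smult_assoc_mat[OF swap_term_carrier smult_carrier_mat[OF K1]] by simp
    also have "swap_term d n i x y * (?c \<cdot>\<^sub>m (swap_term d n j z w * X)) = ?c \<cdot>\<^sub>m (swap_term d n i x y * (swap_term d n j z w * X))"
      by (rule mult_smult_distrib[OF swap_term_carrier K1])
    also have "swap_term d n i x y * (swap_term d n j z w * X) = swap_term d n i x y * swap_term d n j z w * X"
      by (rule assoc_mult_mat[OF swap_term_carrier swap_term_carrier X, symmetric])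
    finally show ?thesis
      using trace_smult[OF smult_carrier_mat[OF mult_carrier_mat[OF mult_carrier_mat[OF swap_term_carrier swap_term_carrier] X]]]
        trace_smult[OF mult_carrier_mat[OF mult_carrier_mat[OF swap_term_carrier swap_term_carrier] X]]
      by simp
  qed
  ultimately show ?thesis by (simp add: sum_triple sum_distrib_left)
qed

locale eigen_probe =
  fixes d n :: nat and \<rho> :: "complex mat" and \<psi> :: "complex vec" and lam :: complex
  assumes \<rho>: "\<rho> \<in> carrier_mat d d" and tr\<rho>: "mtrace \<rho> = 1" and unit: "unit_state d \<psi>"
    and eig: "\<rho> *\<^sub>v \<psi> = lam \<cdot>\<^sub>v \<psi>" and n: "0 < n"
begin

lemma psi_carrier: "\<psi> \<in> carrier_vec d"
  using unit by (simp add: unit_state_def)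

lemma psi_cinner: "(\<Sum>a<d. \<psi> $ a * cnj (\<psi> $ a)) = 1"
  by (rule unit_state_cinner[OF unit])

lemma proj_psi_carrier: "proj \<psi> \<in> carrier_mat d d" using psi_carrier by (rule proj_carrier)

lemma index_proj: "a < d \<Longrightarrow> b < d \<Longrightarrow> proj \<psi> $$ (a,b) = \<psi> $ a * cnj (\<psi> $ b)"
  using psi_carrier by (simp add: proj_def)

lemma eigen_row: "y < d \<Longrightarrow> (\<Sum>x<d. \<rho> $$ (y,x) * \<psi> $ x) = lam * \<psi> $ y"
proof -
  assume y: "y < d"
  have "(\<rho> *\<^sub>v \<psi>) $ y = (\<Sum>x<d. \<rho> $$ (y,x) * \<psi> $ x)"
    using \<rho> psi_carrier y by (simp add: scalar_prod_def lessThan_atLeast0)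
  thus ?thesis using eig y psi_carrier by simp
qed

lemma kron_power_carrier: "kron_prod (\<lambda>_. \<rho>) n \<in> carrier_mat (d^n) (d^n)"
  by (rule kron_prod_carrier) (use \<rho> in \<open>auto intro!: mult_carrier_mat\<close>)

lemma trace_probe_state: "mtrace (probe_state n \<rho> \<psi>) = 1"
proof -
  have "mtrace (probe_state n \<rho> \<psi>) = mtrace (kron_prod (\<lambda>_. \<rho>) n) * mtrace (proj \<psi>)"
    unfolding probe_state_def kpow_eq_kron_prod by (rule trace_kron[OF kron_power_carrier proj_psi_carrier])
  also have "mtrace (kron_prod (\<lambda>_. \<rho>) n) = 1"
    using trace_kron_prod[of n "\<lambda>_. \<rho>" d] \<rho> tr\<rho> by simp
  also have "mtrace (proj \<psi>) = (\<Sum>a<d. \<psi> $ a * cnj (\<psi> $ a))"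
    using proj_psi_carrier by (simp add: mtrace_def index_proj)
  finally show ?thesis using psi_cinner by simp
qed

lemma trace_kron_prod_probe:
  assumes f: "\<And>t. t < n \<Longrightarrow> f t \<in> carrier_mat d d" and E: "E \<in> carrier_mat d d"
  shows "mtrace (kron (kron_prod f n) E * probe_state n \<rho> \<psi>) = (\<Prod>t<n. mtrace (f t * \<rho>)) * mtrace (E * proj \<psi>)"
proof -
  have "kron (kron_prod f n) E * probe_state n \<rho> \<psi> = kron (kron_prod (\<lambda>t. f t * \<rho>) n) (E * proj \<psi>)"
    unfolding probe_state_def kpow_eq_kron_prod
    using kron_mult_mix[OF kron_prod_carrier[OF f] E kron_power_carrier proj_psi_carrier]
      kron_prod_mult[of n f d "\<lambda>_. \<rho>"] f \<rho> by simp
  also have "mtrace \<dots> = (\<Prod>t<n. mtrace (f t * \<rho>)) * mtrace (E * proj \<psi>)"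
  proof -
    have f\<rho>: "\<And>t. t < n \<Longrightarrow> f t * \<rho> \<in> carrier_mat d d" using f \<rho> by (metis mult_carrier_mat)
    show ?thesis
      using trace_kron[OF kron_prod_carrier[OF f\<rho>] mult_carrier_mat[OF E proj_psi_carrier]]
        trace_kron_prod[OF f\<rho>] by simp
  qed
  finally show ?thesis .
qed

lemma trace_swap_term_probe:
  assumes i: "i < n" and x: "x < d" and y: "y < d"
  shows "mtrace (swap_term d n i x y * probe_state n \<rho> \<psi>) = \<rho> $$ (y,x) * (\<psi> $ x * cnj (\<psi> $ y))"
proof -
  have "(\<Prod>t<n. mtrace (slot_unit d i x y t * \<rho>)) = (\<Prod>t<n. if t = i then \<rho> $$ (y,x) else 1)"
    using trace_mat_unit_mult[OF \<rho> x y] tr\<rho> left_mult_one_mat[OF \<rho>] by (intro prod.cong) (auto simp: slot_unit_def)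
  moreover have "mtrace (mat_unit d y x * proj \<psi>) = \<psi> $ x * cnj (\<psi> $ y)"
    using trace_mat_unit_mult[OF proj_psi_carrier y x] index_proj x y by simp
  ultimately show ?thesis
    unfolding swap_term_def trace_kron_prod_probe[OF slot_unit_carrier mat_unit_carrier] using i by simp
qed

lemma prod_trace_slot_unit_pair:
  assumes i: "i < n" and j: "j < n" and x: "x < d" and y: "y < d" and z: "z < d" and w: "w < d"
  shows "(\<Prod>t<n. mtrace (slot_unit d i x y t * slot_unit d j z w t * \<rho>)) =
    (if i = j then (if y = z then \<rho> $$ (w,x) else 0) else \<rho> $$ (y,x) * \<rho> $$ (w,z))"
proof (cases "i = j")
  case True
  have "(\<Prod>t<n. mtrace (slot_unit d i x y t * slot_unit d j z w t * \<rho>))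
      = (\<Prod>t<n. if t = i then (if y = z then \<rho> $$ (w,x) else 0) else 1)"
  proof (intro prod.cong refl)
    fix t
    show "mtrace (slot_unit d i x y t * slot_unit d j z w t * \<rho>) = (if t = i then (if y = z then \<rho> $$ (w,x) else 0) else 1)"
      using True mat_unit_mult[OF x y z w] trace_mat_unit_mult[OF \<rho> x w] \<rho> tr\<rho> left_mult_one_mat[OF \<rho>]
        left_mult_one_mat[OF one_carrier_mat[of d]]
      by (cases "t = i") (simp_all add: slot_unit_def trace_zero_mat)
  qed
  thus ?thesis using True i by simp
next
  case False
  have "(\<Prod>t<n. mtrace (slot_unit d i x y t * slot_unit d j z w t * \<rho>))
      = (\<Prod>t<n. if t = i then \<rho> $$ (y,x) else (if t = j then \<rho> $$ (w,z) else 1))"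
    using False trace_mat_unit_mult[OF \<rho> x y] trace_mat_unit_mult[OF \<rho> z w] tr\<rho> left_mult_one_mat[OF \<rho>]
      left_mult_one_mat[OF mat_unit_carrier, of d z w] right_mult_one_mat[OF mat_unit_carrier, of d x y]
      left_mult_one_mat[OF one_carrier_mat[of d]]
    by (intro prod.cong) (simp_all add: slot_unit_def)
  also have "\<dots> = \<rho> $$ (y,x) * (\<Prod>t\<in>{..<n} - {i}. if t = j then \<rho> $$ (w,z) else 1)"
    using i by (simp add: prod.delta_remove)
  also have "(\<Prod>t\<in>{..<n} - {i}. if t = j then \<rho> $$ (w,z) else 1) = \<rho> $$ (w,z)"
    using j False by simp
  finally show ?thesis using False by simp
qed

lemma trace_swap_term_mult_probe:
  assumes i: "i < n" and j: "j < n" and x: "x < d" and y: "y < d" and z: "z < d" and w: "w < d"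
  shows "mtrace (swap_term d n i x y * swap_term d n j z w * probe_state n \<rho> \<psi>) =
    (if i = j then (if y = z then \<rho> $$ (w,x) else 0) else \<rho> $$ (y,x) * \<rho> $$ (w,z)) *
    (if x = w then \<psi> $ z * cnj (\<psi> $ y) else 0)"
proof -
  have "mtrace (mat_unit d y x * mat_unit d w z * proj \<psi>) = (if x = w then \<psi> $ z * cnj (\<psi> $ y) else 0)"
    using mat_unit_mult[OF y x w z] trace_mat_unit_mult[OF proj_psi_carrier y z] index_proj z y proj_psi_carrier
    by (simp add: trace_zero_mat)
  thus ?thesis
    unfolding swap_term_mult trace_kron_prod_probe[OF mult_carrier_mat[OF slot_unit_carrier slot_unit_carrier]
        mult_carrier_mat[OF mat_unit_carrier mat_unit_carrier]] prod_trace_slot_unit_pair[OF assms] by simp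
qed

lemma probe_carrier: "probe_state n \<rho> \<psi> \<in> carrier_mat (d^n*d) (d^n*d)" using probe_state_carrier[OF \<rho> psi_carrier] .

lemma eigen_quadratic_form: "(\<Sum>x<d. \<Sum>y<d. \<rho> $$ (y,x) * (\<psi> $ x * cnj (\<psi> $ y))) = lam"
proof -
  have "(\<Sum>x<d. \<Sum>y<d. \<rho> $$ (y,x) * (\<psi> $ x * cnj (\<psi> $ y))) = (\<Sum>y<d. \<Sum>x<d. \<rho> $$ (y,x) * (\<psi> $ x * cnj (\<psi> $ y)))"
    by (rule sum.swap)
  also have "\<dots> = (\<Sum>y<d. cnj (\<psi> $ y) * (\<Sum>x<d. \<rho> $$ (y,x) * \<psi> $ x))"
    by (intro sum.cong refl) (simp add: sum_distrib_left ac_simps)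
  also have "\<dots> = (\<Sum>y<d. lam * (\<psi> $ y * cnj (\<psi> $ y)))"
    by (intro sum.cong refl) (simp add: eigen_row)
  also have "\<dots> = lam" using psi_cinner by (simp flip: sum_distrib_left)
  finally show ?thesis .
qed

lemma trace_swap_observable_probe: "mtrace (swap_observable d n * probe_state n \<rho> \<psi>) = lam"
proof -
  let ?F = "\<lambda>s. case s of (i,x,y) \<Rightarrow> (1 / of_nat n) \<cdot>\<^sub>m swap_term d n i x y"
  let ?N = "d^n*d"
  let ?S = "{..<n} \<times> {..<d} \<times> {..<d}"
  let ?X = "probe_state n \<rho> \<psi>"
  have "mtrace (swap_observable d n * ?X) = mtrace (mat_sum ?N (\<lambda>s. ?F s * ?X) ?S)"
    unfolding swap_observable_def by (subst mat_sum_mult_right[OF probe_carrier]) (rule scaled_swap_term_carrier, rule refl)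
  also have "\<dots> = (\<Sum>s\<in>?S. mtrace (?F s * ?X))"
    by (rule trace_mat_sum) (rule mult_carrier_mat[OF scaled_swap_term_carrier probe_carrier])
  also have "\<dots> = (\<Sum>i<n. \<Sum>x<d. \<Sum>y<d. mtrace (?F (i,x,y) * ?X))" by (rule sum_triple)
  also have "\<dots> = (\<Sum>i<n. \<Sum>x<d. \<Sum>y<d. (1 / of_nat n) * (\<rho> $$ (y,x) * (\<psi> $ x * cnj (\<psi> $ y))))"
  proof (intro sum.cong refl)
    fix i x y assume i: "i \<in> {..<n}" and x: "x \<in> {..<d}" and y: "y \<in> {..<d}"
    have "?F (i,x,y) * ?X = (1 / of_nat n) \<cdot>\<^sub>m (swap_term d n i x y * ?X)"
      using mult_smult_assoc_mat[OF swap_term_carrier probe_carrier] by simp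
    hence "mtrace (?F (i,x,y) * ?X) = (1 / of_nat n) * mtrace (swap_term d n i x y * ?X)"
      using trace_smult[OF mult_carrier_mat[OF swap_term_carrier probe_carrier]] by simp
    thus "mtrace (?F (i,x,y) * ?X) = (1 / of_nat n) * (\<rho> $$ (y,x) * (\<psi> $ x * cnj (\<psi> $ y)))"
      using trace_swap_term_probe i x y by simp
  qed
  also have "\<dots> = (\<Sum>i<n. (1 / of_nat n) * lam)"
    by (rule sum.cong[OF refl]) (simp only: sum_distrib_left[symmetric] eigen_quadratic_form)
  also have "\<dots> = lam" using n by simp
  finally show ?thesis .
qed

lemma sum_trace_swap_term_mult_probe_slot:
  assumes i: "i < n" and j: "j < n" and x: "x < d" and y: "y < d"
  shows "(\<Sum>z<d. \<Sum>w<d. mtrace (swap_term d n i x y * swap_term d n j z w * probe_state n \<rho> \<psi>))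
    = (if j = i then \<rho> $$ (x,x) * (\<psi> $ y * cnj (\<psi> $ y)) else lam * (\<rho> $$ (y,x) * (\<psi> $ x * cnj (\<psi> $ y))))"
proof -
  have "(\<Sum>z<d. \<Sum>w<d. mtrace (swap_term d n i x y * swap_term d n j z w * probe_state n \<rho> \<psi>))
    = (\<Sum>z<d. (if i = j then (if y = z then \<rho> $$ (x,x) else 0) else \<rho> $$ (y,x) * \<rho> $$ (x,z)) * (\<psi> $ z * cnj (\<psi> $ y)))"
  proof (intro sum.cong refl)
    fix z assume z: "z \<in> {..<d}"
    have "(\<Sum>w<d. mtrace (swap_term d n i x y * swap_term d n j z w * probe_state n \<rho> \<psi>))
       = (\<Sum>w<d. if x = w then (if i = j then (if y = z then \<rho> $$ (x,x) else 0) else \<rho> $$ (y,x) * \<rho> $$ (x,z)) * (\<psi> $ z * cnj (\<psi> $ y)) else 0)"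
      using trace_swap_term_mult_probe i j x y z by (intro sum.cong refl) auto
    also have "\<dots> = (if i = j then (if y = z then \<rho> $$ (x,x) else 0) else \<rho> $$ (y,x) * \<rho> $$ (x,z)) * (\<psi> $ z * cnj (\<psi> $ y))"
      using x by simp
    finally show "(\<Sum>w<d. mtrace (swap_term d n i x y * swap_term d n j z w * probe_state n \<rho> \<psi>))
       = (if i = j then (if y = z then \<rho> $$ (x,x) else 0) else \<rho> $$ (y,x) * \<rho> $$ (x,z)) * (\<psi> $ z * cnj (\<psi> $ y))" .
  qed
  also have "\<dots> = (if j = i then \<rho> $$ (x,x) * (\<psi> $ y * cnj (\<psi> $ y)) else lam * (\<rho> $$ (y,x) * (\<psi> $ x * cnj (\<psi> $ y))))"
  proof (cases "j = i")
    case True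
    have "(\<Sum>z<d. (if i = j then (if y = z then \<rho> $$ (x,x) else 0) else \<rho> $$ (y,x) * \<rho> $$ (x,z)) * (\<psi> $ z * cnj (\<psi> $ y)))
        = (\<Sum>z<d. if y = z then \<rho> $$ (x,x) * (\<psi> $ z * cnj (\<psi> $ y)) else 0)"
      using True by (intro sum.cong refl) auto
    also have "\<dots> = \<rho> $$ (x,x) * (\<psi> $ y * cnj (\<psi> $ y))" using y by simp
    finally show ?thesis using True by simp
  next
    case False
    have "(\<Sum>z<d. (if i = j then (if y = z then \<rho> $$ (x,x) else 0) else \<rho> $$ (y,x) * \<rho> $$ (x,z)) * (\<psi> $ z * cnj (\<psi> $ y)))
        = (\<rho> $$ (y,x) * cnj (\<psi> $ y)) * (\<Sum>z<d. \<rho> $$ (x,z) * \<psi> $ z)"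
      using False by (simp add: sum_distrib_left ac_simps)
    also have "\<dots> = lam * (\<rho> $$ (y,x) * (\<psi> $ x * cnj (\<psi> $ y)))"
      using eigen_row[OF x] by (simp add: ac_simps)
    finally show ?thesis using False by simp
  qed
  finally show ?thesis .
qed

lemma sum_trace_swap_term_mult_probe:
  assumes i: "i < n" and x: "x < d" and y: "y < d"
  shows "(\<Sum>j<n. \<Sum>z<d. \<Sum>w<d. mtrace (swap_term d n i x y * swap_term d n j z w * probe_state n \<rho> \<psi>))
     = \<rho> $$ (x,x) * (\<psi> $ y * cnj (\<psi> $ y)) + (of_nat n - 1) * (lam * (\<rho> $$ (y,x) * (\<psi> $ x * cnj (\<psi> $ y))))"
  using sum_trace_swap_term_mult_probe_slot[OF i _ x y] sum_if_eq_else[OF i] by simp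

lemma trace_swap_observable_square_probe:
  "mtrace (swap_observable d n * swap_observable d n * probe_state n \<rho> \<psi>) = (1 + (of_nat n - 1) * lam^2) / of_nat n"
proof -
  let ?c = "1 / (of_nat n :: complex)"
  have "mtrace (swap_observable d n * swap_observable d n * probe_state n \<rho> \<psi>)
     = ?c * ?c * (\<Sum>i<n. \<Sum>x<d. \<Sum>y<d. \<rho> $$ (x,x) * (\<psi> $ y * cnj (\<psi> $ y))
         + (of_nat n - 1) * (lam * (\<rho> $$ (y,x) * (\<psi> $ x * cnj (\<psi> $ y)))))"
    unfolding trace_swap_observable_square[OF probe_carrier]
    by (intro arg_cong[where f="\<lambda>S. ?c * ?c * S"] sum.cong refl) (simp add: sum_trace_swap_term_mult_probe)
  also have "\<dots> = ?c * ?c * (\<Sum>i<n. (\<Sum>x<d. \<Sum>y<d. \<rho> $$ (x,x) * (\<psi> $ y * cnj (\<psi> $ y)))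
      + (of_nat n - 1) * (lam * (\<Sum>x<d. \<Sum>y<d. \<rho> $$ (y,x) * (\<psi> $ x * cnj (\<psi> $ y)))))"
    by (simp add: sum.distrib sum_distrib_left)
  also have "(\<Sum>x<d. \<Sum>y<d. \<rho> $$ (x,x) * (\<psi> $ y * cnj (\<psi> $ y))) = 1"
    using tr\<rho> psi_cinner \<rho> by (simp add: mtrace_def flip: sum_distrib_left sum_distrib_right)
  also have "(\<Sum>x<d. \<Sum>y<d. \<rho> $$ (y,x) * (\<psi> $ x * cnj (\<psi> $ y))) = lam" by (rule eigen_quadratic_form)
  also have "?c * ?c * (\<Sum>i<n. 1 + (of_nat n - 1) * (lam * lam)) = (1 + (of_nat n - 1) * lam^2) / of_nat n"
    using n by (simp add: power2_eq_square field_simps)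
  finally show ?thesis .
qed

end

section \<open>Eigenphases of density matrices\<close>

lemma density_matrix_spectral:
  assumes "density_matrix d \<rho>"
  shows "\<exists>U \<mu>. unitary_mat d U \<and> \<rho> = U * diag_matrix d (\<lambda>i. complex_of_real (\<mu> i)) * mat_adjoint U
    \<and> (\<forall>k<d. 0 \<le> \<mu> k \<and> \<mu> k \<le> 1)"
proof -
  have \<rho>: "\<rho> \<in> carrier_mat d d" and herm: "mat_adjoint \<rho> = \<rho>"
    and quad: "\<And>v. v \<in> carrier_vec d \<Longrightarrow> 0 \<le> Re (\<Sum>i<d. cnj (v $ i) * (\<rho> *\<^sub>v v) $ i)"
    and tr: "mtrace \<rho> = 1"
    using assms unfolding density_matrix_def psd_def by auto
  obtain U and \<mu> :: "nat \<Rightarrow> real" where U: "unitary_mat d U"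
    and \<rho>eq: "\<rho> = U * diag_matrix d (\<lambda>i. complex_of_real (\<mu> i)) * mat_adjoint U"
    using hermitian_spectral_decomposition[OF \<rho> herm] by blast
  have Uc: "U \<in> carrier_mat d d" using U by (simp add: unitary_mat_def)
  have \<mu>_nonneg: "0 \<le> \<mu> l" if l: "l < d" for l
  proof -
    define v where "v = col U l"
    have v: "v \<in> carrier_vec d" unfolding v_def using Uc by (metis carrier_matD(1) carrier_vecI dim_col)
    have "\<rho> *\<^sub>v v = complex_of_real (\<mu> l) \<cdot>\<^sub>v v"
      unfolding \<rho>eq unitary_conj_diag_eigen[OF U v]
      by (simp add: v_def unitary_adjoint_col[OF U l] unit_vec_def)
    hence "(\<Sum>i<d. cnj (v $ i) * (\<rho> *\<^sub>v v) $ i) = complex_of_real (\<mu> l) * (\<Sum>i<d. cnj (U $$ (i,l)) * U $$ (i,l))"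
      using v Uc l by (simp add: v_def sum_distrib_left ac_simps)
    also have "\<dots> = complex_of_real (\<mu> l)" by (simp add: unitary_col_cinner[OF U l l])
    finally show ?thesis using quad[OF v] by simp
  qed
  have "complex_of_real (\<Sum>k<d. \<mu> k) = 1"
    using tr trace_unitary_conj_diag[OF U] \<rho>eq by simp
  hence \<mu>_sum: "(\<Sum>k<d. \<mu> k) = 1" by (metis of_real_eq_1_iff)
  have "\<mu> l \<le> 1" if "l < d" for l
    using member_le_sum[of l "{..<d}" \<mu>] \<mu>_nonneg that \<mu>_sum by auto
  thus ?thesis using U \<rho>eq \<mu>_nonneg by blast
qed

lemma cis_eq_imp_int_multiple: "cis x = cis y \<Longrightarrow> \<exists>K::int. x - y = 2 * pi * of_int K"
proof -
  assume "cis x = cis y"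
  hence "cos (x - y) = 1" using cis_divide[of x y] by (metis cis.sel(1) divide_self_if cis_neq_zero one_complex.sel(1))
  then obtain K :: int where "x - y = of_int K * 2 * pi" using cos_one_2pi_int by blast
  thus ?thesis by (intro exI[of _ K]) simp
qed

lemma cis_eq_imp_eq:
  assumes "cis x = cis y" and "\<bar>x - y\<bar> < 2 * pi" shows "x = y"
proof -
  obtain K :: int where K: "x - y = 2 * pi * of_int K" using cis_eq_imp_int_multiple[OF assms(1)] by blast
  have "\<bar>of_int K\<bar> < (1::real)" using assms(2) K pi_gt_zero by (simp add: abs_mult)
  hence "K = 0" by linarith
  thus ?thesis using K by simp
qed

theorem density_matrix_eigenphase:
  assumes dm: "density_matrix d \<rho>" and us: "unit_state d \<psi>"
    and ev: "mat_exp (- \<i> \<cdot>\<^sub>m \<rho>) *\<^sub>v \<psi> = exp (\<i> * complex_of_real \<theta>) \<cdot>\<^sub>v \<psi>"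
  shows "\<exists>l::real. \<rho> *\<^sub>v \<psi> = complex_of_real l \<cdot>\<^sub>v \<psi> \<and> (\<exists>K::int. \<theta> = - l + 2 * pi * of_int K)"
proof -
  obtain U \<mu> where U: "unitary_mat d U"
    and \<rho>eq: "\<rho> = U * diag_matrix d (\<lambda>i. complex_of_real (\<mu> i)) * mat_adjoint U"
    and \<mu>: "\<And>k. k < d \<Longrightarrow> 0 \<le> \<mu> k \<and> \<mu> k \<le> 1"
    using density_matrix_spectral[OF dm] by blast
  have Uc: "U \<in> carrier_mat d d" using U by (simp add: unitary_mat_def)
  have \<psi>: "\<psi> \<in> carrier_vec d" using us by (simp add: unit_state_def)
  define c where "c = mat_adjoint U *\<^sub>v \<psi>"
  have "mat_exp (- \<i> \<cdot>\<^sub>m \<rho>) = U * diag_matrix d (\<lambda>k. cis (- \<mu> k)) * mat_adjoint U"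
    unfolding \<rho>eq smult_conj_diag_matrix[OF Uc] mat_exp_unitary_conj_diag[OF U]
    by (simp add: cis_conv_exp)
  hence phase: "cis (- \<mu> k) * c $ k = cis \<theta> * c $ k" if "k < d" for k
    using ev that unitary_conj_diag_eigen[OF U \<psi>] by (simp add: c_def cis_conv_exp)
  have \<psi>c: "\<psi> = U *\<^sub>v c"
    using assoc_mult_mat_vec[OF Uc mat_adjoint_carrier[OF Uc] \<psi>] U \<psi> by (simp add: c_def unitary_mat_def)
  obtain l0 where l0: "l0 < d" and cl0: "c $ l0 \<noteq> 0"
  proof -
    have "c \<noteq> 0\<^sub>v d"
    proof
      assume "c = 0\<^sub>v d"
      hence "\<psi> = 0\<^sub>v d" using \<psi>c Uc by auto
      thus False using us by (simp add: unit_state_def)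
    qed
    thus ?thesis using that Uc by (auto simp: c_def vec_eq_iff)
  qed
  have same: "\<mu> k = \<mu> l0" if "k < d" "c $ k \<noteq> 0" for k
  proof (rule cis_eq_imp_eq[THEN neg_equal_iff_equal[THEN iffD1]])
    show "cis (- \<mu> k) = cis (- \<mu> l0)" using phase[of k] phase[OF l0] that cl0 by simp
    show "\<bar>- \<mu> k - - \<mu> l0\<bar> < 2 * pi" using \<mu>[of k] \<mu>[OF l0] that pi_ge_two by auto
  qed
  have "\<rho> *\<^sub>v \<psi> = complex_of_real (\<mu> l0) \<cdot>\<^sub>v \<psi>"
    unfolding \<rho>eq unitary_conj_diag_eigen[OF U \<psi>] c_def[symmetric]
    using same by (metis mult_zero_right)
  moreover obtain K :: int where "\<theta> - - \<mu> l0 = 2 * pi * of_int K"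
    using cis_eq_imp_int_multiple[of \<theta> "- \<mu> l0"] phase[OF l0] cl0 by auto
  ultimately show ?thesis by (intro exI[of _ "\<mu> l0"]) (auto simp: algebra_simps)
qed


section \<open>Statistics of the swap-test measurement\<close>

lemma trace_proj_mult:
  assumes u: "u \<in> carrier_vec N" and Y: "Y \<in> carrier_mat N N"
  shows "mtrace (proj u * Y) = (\<Sum>a<N. \<Sum>b<N. u $ a * cnj (u $ b) * Y $$ (b,a))"
proof -
  have P: "proj u \<in> carrier_mat N N" by (rule proj_carrier[OF u])
  show ?thesis unfolding trace_mult_sum[OF P Y] using u
    by (intro sum.cong refl) (simp add: proj_def)
qed

lemma trace_proj_gram_nonneg:
  assumes K: "K \<in> carrier_mat N M" and u: "u \<in> carrier_vec N"
  shows "0 \<le> Re (mtrace (proj u * (K * mat_adjoint K)))"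
proof -
  have KKc: "K * mat_adjoint K \<in> carrier_mat N N" using K by (metis mat_adjoint_carrier mult_carrier_mat)
  define w where "w c = (\<Sum>b<N. cnj (u $ b) * K $$ (b,c))" for c
  have "mtrace (proj u * (K * mat_adjoint K)) = (\<Sum>a<N. \<Sum>b<N. u $ a * cnj (u $ b) * (\<Sum>c<M. K $$ (b,c) * cnj (K $$ (a,c))))"
    unfolding trace_proj_mult[OF u KKc]
  proof (intro sum.cong refl)
    fix a b assume a: "a \<in> {..<N}" and b: "b \<in> {..<N}"
    have "(K * mat_adjoint K) $$ (b,a) = (\<Sum>c<M. K $$ (b,c) * mat_adjoint K $$ (c,a))"
      using a b by (intro index_mult_mat_sum[OF K mat_adjoint_carrier[OF K]]) auto
    also have "\<dots> = (\<Sum>c<M. K $$ (b,c) * cnj (K $$ (a,c)))" using K a by (intro sum.cong refl) auto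
    finally show "u $ a * cnj (u $ b) * (K * mat_adjoint K) $$ (b,a) = u $ a * cnj (u $ b) * (\<Sum>c<M. K $$ (b,c) * cnj (K $$ (a,c)))" by simp
  qed
  also have "\<dots> = (\<Sum>a<N. \<Sum>b<N. \<Sum>c<M. (u $ a * cnj (K $$ (a,c))) * (cnj (u $ b) * K $$ (b,c)))"
    by (simp add: sum_distrib_left ac_simps)
  also have "\<dots> = (\<Sum>a<N. \<Sum>c<M. \<Sum>b<N. (u $ a * cnj (K $$ (a,c))) * (cnj (u $ b) * K $$ (b,c)))"
    by (rule sum.cong[OF refl], rule sum.swap)
  also have "\<dots> = (\<Sum>c<M. \<Sum>a<N. \<Sum>b<N. (u $ a * cnj (K $$ (a,c))) * (cnj (u $ b) * K $$ (b,c)))"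
    by (rule sum.swap)
  also have "\<dots> = (\<Sum>c<M. cnj (w c) * w c)"
  proof (intro sum.cong refl)
    fix c
    have "cnj (w c) = (\<Sum>a<N. u $ a * cnj (K $$ (a,c)))" unfolding w_def by simp
    thus "(\<Sum>a<N. \<Sum>b<N. (u $ a * cnj (K $$ (a,c))) * (cnj (u $ b) * K $$ (b,c))) = cnj (w c) * w c"
      unfolding w_def by (simp add: sum_product)
  qed
  also have "\<dots> = (\<Sum>c<M. complex_of_real ((cmod (w c))^2))"
    by (rule sum.cong[OF refl]) (metis complex_norm_square mult.commute)
  finally show ?thesis by (simp add: sum_nonneg)
qed

lemma proj_psd:
  assumes u: "u \<in> carrier_vec N"
  shows "psd N (proj u)"
proof -
  have P: "proj u \<in> carrier_mat N N" by (rule proj_carrier[OF u])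
  have herm: "mat_adjoint (proj u) = proj u"
    by (rule eq_matI) (use u in \<open>auto simp: proj_def\<close>)
  have "0 \<le> Re (\<Sum>i<N. cnj (v $ i) * (proj u *\<^sub>v v) $ i)" if v: "v \<in> carrier_vec N" for v
  proof -
    define w where "w = (\<Sum>j<N. cnj (u $ j) * v $ j)"
    have "(proj u *\<^sub>v v) $ i = u $ i * w" if i: "i < N" for i
      using index_mult_mat_vec_sum[OF P v i] u i unfolding w_def by (simp add: proj_def sum_distrib_left ac_simps)
    hence "(\<Sum>i<N. cnj (v $ i) * (proj u *\<^sub>v v) $ i) = (\<Sum>i<N. cnj (v $ i) * u $ i) * w"
      by (simp add: sum_distrib_right mult.assoc)
    also have "(\<Sum>i<N. cnj (v $ i) * u $ i) = cnj w" unfolding w_def by (simp add: mult.commute)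
    also have "cnj w * w = complex_of_real ((cmod w)^2)" by (metis complex_norm_square mult.commute)
    finally show ?thesis by simp
  qed
  thus ?thesis unfolding psd_def using P herm by auto
qed

lemma trace_unitary_conj_diag_mult:
  assumes V: "V \<in> carrier_mat N N" and X: "X \<in> carrier_mat N N"
  shows "mtrace (V * diag_matrix N f * mat_adjoint V * X) = (\<Sum>k<N. f k * mtrace (proj (col V k) * X))"
proof -
  have cv: "col V k \<in> carrier_vec N" if "k < N" for k using V by (metis carrier_matD(1) carrier_vecI dim_col)
  have "mtrace (V * diag_matrix N f * mat_adjoint V * X) = (\<Sum>a<N. \<Sum>b<N. (V * diag_matrix N f * mat_adjoint V) $$ (a,b) * X $$ (b,a))"
    by (rule trace_mult_sum[OF conj_diag_matrix_carrier[OF V] X])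
  also have "\<dots> = (\<Sum>a<N. \<Sum>b<N. \<Sum>k<N. f k * (V $$ (a,k) * cnj (V $$ (b,k)) * X $$ (b,a)))"
  proof (rule sum.cong[OF refl], rule sum.cong[OF refl])
    fix a b assume "a \<in> {..<N}" "b \<in> {..<N}"
    hence a: "a < N" and b: "b < N" by auto
    have "(V * diag_matrix N f * mat_adjoint V) $$ (a,b) * X $$ (b,a) = (\<Sum>k<N. V $$ (a,k) * f k * cnj (V $$ (b,k))) * X $$ (b,a)"
      by (simp only: index_conj_diag_matrix[OF V a b])
    also have "\<dots> = (\<Sum>k<N. V $$ (a,k) * f k * cnj (V $$ (b,k)) * X $$ (b,a))"
      by (rule sum_distrib_right)
    also have "\<dots> = (\<Sum>k<N. f k * (V $$ (a,k) * cnj (V $$ (b,k)) * X $$ (b,a)))"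
      by (rule sum.cong[OF refl]) (simp only: mult_ac)
    finally show "(V * diag_matrix N f * mat_adjoint V) $$ (a,b) * X $$ (b,a) = (\<Sum>k<N. f k * (V $$ (a,k) * cnj (V $$ (b,k)) * X $$ (b,a)))" .
  qed
  also have "\<dots> = (\<Sum>a<N. \<Sum>k<N. \<Sum>b<N. f k * (V $$ (a,k) * cnj (V $$ (b,k)) * X $$ (b,a)))"
    by (rule sum.cong[OF refl], rule sum.swap)
  also have "\<dots> = (\<Sum>k<N. \<Sum>a<N. \<Sum>b<N. f k * (V $$ (a,k) * cnj (V $$ (b,k)) * X $$ (b,a)))"
    by (rule sum.swap)
  also have "\<dots> = (\<Sum>k<N. f k * mtrace (proj (col V k) * X))"
  proof (rule sum.cong[OF refl])
    fix k assume "k \<in> {..<N}"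
    hence k: "k < N" by simp
    have "mtrace (proj (col V k) * X) = (\<Sum>a<N. \<Sum>b<N. col V k $ a * cnj (col V k $ b) * X $$ (b,a))"
      by (rule trace_proj_mult[OF cv[OF k] X])
    also have "\<dots> = (\<Sum>a<N. \<Sum>b<N. V $$ (a,k) * cnj (V $$ (b,k)) * X $$ (b,a))"
      using V k by (intro sum.cong refl) auto
    finally show "(\<Sum>a<N. \<Sum>b<N. f k * (V $$ (a,k) * cnj (V $$ (b,k)) * X $$ (b,a))) = f k * mtrace (proj (col V k) * X)"
      by (simp add: sum_distrib_left)
  qed
  finally show ?thesis .
qed

lemma unitary_povm:
  assumes V: "unitary_mat N V"
  shows "povm N N (\<lambda>k. proj (col V k))"
  unfolding povm_def
proof (intro conjI allI impI)
  have Vc: "V \<in> carrier_mat N N" using V by (simp add: unitary_mat_def)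
  have cv: "col V k \<in> carrier_vec N" for k using Vc by (metis carrier_matD(1) carrier_vecI dim_col)
  show "psd N (proj (col V k))" for k by (rule proj_psd[OF cv])
  show "mat N N (\<lambda>(i, j). \<Sum>k<N. proj (col V k) $$ (i, j)) = 1\<^sub>m N"
  proof (rule eq_matI)
    fix i j assume "i < dim_row (1\<^sub>m N)" "j < dim_col (1\<^sub>m N)"
    hence i: "i < N" and j: "j < N" by auto
    have "(\<Sum>k<N. proj (col V k) $$ (i, j)) = (V * mat_adjoint V) $$ (i,j)"
      unfolding index_mult_mat_sum[OF Vc mat_adjoint_carrier[OF Vc] i j]
      using Vc i j by (intro sum.cong refl) (auto simp: proj_def)
    thus "mat N N (\<lambda>(i, j). \<Sum>k<N. proj (col V k) $$ (i, j)) $$ (i,j) = 1\<^sub>m N $$ (i,j)"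
      using V i j by (simp add: unitary_mat_def)
  qed auto
qed

lemma nonneg_conj_diag_gram:
  assumes U: "U \<in> carrier_mat d d" and \<mu>: "\<And>k. k < d \<Longrightarrow> 0 \<le> \<mu> k"
  shows "U * diag_matrix d (\<lambda>k. complex_of_real (\<mu> k)) * mat_adjoint U
    = (U * diag_matrix d (\<lambda>k. complex_of_real (sqrt (\<mu> k))))
      * mat_adjoint (U * diag_matrix d (\<lambda>k. complex_of_real (sqrt (\<mu> k))))"
proof -
  let ?S = "diag_matrix d (\<lambda>k. complex_of_real (sqrt (\<mu> k)))"
  have SS: "?S * ?S = diag_matrix d (\<lambda>k. complex_of_real (\<mu> k))"
    unfolding diag_matrix_mult
    by (rule eq_matI) (auto simp: diag_matrix_def \<mu> simp flip: of_real_mult)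
  have "(U * ?S) * mat_adjoint (U * ?S) = (U * ?S) * (?S * mat_adjoint U)"
    unfolding mat_adjoint_mult[OF U diag_matrix_carrier] mat_adjoint_diag_matrix by simp
  also have "\<dots> = U * (?S * (?S * mat_adjoint U))"
    by (rule assoc_mult_mat[of _ d d _ d _ d]) (use U in \<open>auto intro!: mult_carrier_mat[of _ d d _ d]\<close>)
  also have "\<dots> = U * ((?S * ?S) * mat_adjoint U)"
    using U by (simp add: assoc_mult_mat[of ?S d d ?S d "mat_adjoint U" d])
  also have "\<dots> = U * (?S * ?S) * mat_adjoint U"
    by (rule assoc_mult_mat[symmetric, of _ d d _ d _ d]) (use U in \<open>auto intro!: mult_carrier_mat[of _ d d _ d]\<close>)
  finally show ?thesis unfolding SS ..
qed

lemma proj_gram: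
  "\<psi> \<in> carrier_vec d \<Longrightarrow> proj \<psi> = mat d 1 (\<lambda>(a,_). \<psi> $ a) * mat_adjoint (mat d 1 (\<lambda>(a,_). \<psi> $ a))"
  by (rule eq_matI) (auto simp: proj_def scalar_prod_def)

lemma kpow_gram:
  assumes B: "B \<in> carrier_mat d d"
  shows "kpow (B * mat_adjoint B) n = kpow B n * mat_adjoint (kpow B n)"
  using B by (simp add: kpow_eq_kron_prod kron_prod_mult[where d=d] mat_adjoint_kron_prod)

lemma density_probe_outcome_nonneg:
  assumes dm: "density_matrix d \<rho>" and \<psi>: "\<psi> \<in> carrier_vec d" and u: "u \<in> carrier_vec (d^n*d)"
  shows "0 \<le> Re (mtrace (proj u * probe_state n \<rho> \<psi>))"
proof -
  obtain U \<mu> where U: "unitary_mat d U"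
    and \<rho>eq: "\<rho> = U * diag_matrix d (\<lambda>i. complex_of_real (\<mu> i)) * mat_adjoint U"
    and \<mu>: "\<And>k. k < d \<Longrightarrow> 0 \<le> \<mu> k \<and> \<mu> k \<le> 1"
    using density_matrix_spectral[OF dm] by blast
  define B where "B = U * diag_matrix d (\<lambda>k. complex_of_real (sqrt (\<mu> k)))"
  define \<Psi> where "\<Psi> = mat d 1 (\<lambda>(a,_). \<psi> $ a)"
  have Uc: "U \<in> carrier_mat d d" using U by (simp add: unitary_mat_def)
  have B: "B \<in> carrier_mat d d" unfolding B_def using Uc by simp
  have A: "kpow B n \<in> carrier_mat (d^n) (d^n)"
    using kron_prod_carrier[of n "\<lambda>_. B" d] B by (simp add: kpow_eq_kron_prod)
  have \<Psi>: "\<Psi> \<in> carrier_mat d 1" unfolding \<Psi>_def by simp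
  have "\<rho> = B * mat_adjoint B"
    unfolding \<rho>eq B_def using \<mu> by (intro nonneg_conj_diag_gram[OF Uc]) auto
  hence "probe_state n \<rho> \<psi> = kron (kpow B n * mat_adjoint (kpow B n)) (\<Psi> * mat_adjoint \<Psi>)"
    unfolding probe_state_def \<Psi>_def by (simp add: kpow_gram[OF B] proj_gram[OF \<psi>])
  also have "\<dots> = kron (kpow B n) \<Psi> * mat_adjoint (kron (kpow B n) \<Psi>)"
    by (simp add: kron_mult_mix[OF A \<Psi> mat_adjoint_carrier[OF A] mat_adjoint_carrier[OF \<Psi>]] mat_adjoint_kron)
  finally show ?thesis
    using trace_proj_gram_nonneg[OF kron_carrier[OF A \<Psi>]] u by simp
qed

lemma weighted_chebyshev:
  fixes p x :: "nat \<Rightarrow> real"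
  assumes p: "\<And>k. k < N \<Longrightarrow> 0 \<le> p k" and Bd: "Bd \<subseteq> {..<N}"
    and bad: "\<And>k. k \<in> Bd \<Longrightarrow> \<epsilon> < \<bar>x k\<bar>" and e: "0 < \<epsilon>"
    and tot: "(\<Sum>k<N. p k * (x k)^2) \<le> T"
  shows "(\<Sum>k\<in>Bd. p k) \<le> T / \<epsilon>^2"
proof -
  have fin: "finite Bd" using Bd finite_subset by blast
  have "(\<Sum>k\<in>Bd. p k) \<le> (\<Sum>k\<in>Bd. p k * (x k)^2 / \<epsilon>^2)"
  proof (rule sum_mono)
    fix k assume k: "k \<in> Bd"
    have pk: "0 \<le> p k" using p k Bd by auto
    have "\<epsilon>^2 \<le> (x k)^2" using bad[OF k] e by (metis abs_le_square_iff less_imp_le abs_of_pos)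
    hence "1 \<le> (x k)^2 / \<epsilon>^2" using e by simp
    hence "p k * 1 \<le> p k * ((x k)^2 / \<epsilon>^2)" using pk by (rule mult_left_mono)
    thus "p k \<le> p k * (x k)^2 / \<epsilon>^2" by simp
  qed
  also have "\<dots> \<le> (\<Sum>k<N. p k * (x k)^2 / \<epsilon>^2)"
    using Bd p by (intro sum_mono2) auto
  also have "\<dots> = (\<Sum>k<N. p k * (x k)^2) / \<epsilon>^2" by (simp add: sum_divide_distrib)
  also have "\<dots> \<le> T / \<epsilon>^2" using tot e by (simp add: divide_right_mono)
  finally show ?thesis .
qed

lemma (in eigen_probe) swap_measurement_second_moment:
  assumes V: "unitary_mat (d^n*d) V"
    and obs: "swap_observable d n = V * diag_matrix (d^n*d) (\<lambda>k. complex_of_real (\<nu> k)) * mat_adjoint V"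
    and lam: "lam = complex_of_real l"
  shows "(\<Sum>k<d^n*d. Re (mtrace (proj (col V k) * probe_state n \<rho> \<psi>)) * (\<nu> k - l)\<^sup>2) = (1 - l\<^sup>2) / real n"
proof -
  let ?N = "d^n*d"
  define q where "q k = mtrace (proj (col V k) * probe_state n \<rho> \<psi>)" for k
  have Vc: "V \<in> carrier_mat ?N ?N" using V by (simp add: unitary_mat_def)
  have moment: "mtrace (V * diag_matrix ?N f * mat_adjoint V * probe_state n \<rho> \<psi>) = (\<Sum>k<?N. f k * q k)" for f
    unfolding q_def by (rule trace_unitary_conj_diag_mult[OF Vc probe_carrier])
  have "V * diag_matrix ?N (\<lambda>_. 1) * mat_adjoint V = 1\<^sub>m ?N"
    using V Vc by (simp add: diag_matrix_one unitary_mat_def)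
  hence S0: "(\<Sum>k<?N. q k) = 1"
    using moment[of "\<lambda>_. 1"] trace_probe_state probe_carrier by simp
  have S1: "(\<Sum>k<?N. complex_of_real (\<nu> k) * q k) = complex_of_real l"
    using moment trace_swap_observable_probe obs lam by simp
  have S2: "(\<Sum>k<?N. complex_of_real (\<nu> k) * complex_of_real (\<nu> k) * q k)
      = (1 + (of_nat n - 1) * (complex_of_real l)\<^sup>2) / of_nat n"
    using moment trace_swap_observable_square_probe lam
    by (simp add: obs unitary_conj_diag_mult[OF V])
  have "(\<Sum>k<?N. complex_of_real ((\<nu> k - l)\<^sup>2) * q k)
      = (\<Sum>k<?N. complex_of_real (\<nu> k) * complex_of_real (\<nu> k) * q k)
        - 2 * complex_of_real l * (\<Sum>k<?N. complex_of_real (\<nu> k) * q k)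
        + (complex_of_real l)\<^sup>2 * (\<Sum>k<?N. q k)"
    by (simp add: sum_distrib_left sum_subtractf sum.distrib power2_eq_square algebra_simps)
  also have "\<dots> = complex_of_real ((1 - l\<^sup>2) / real n)"
    unfolding S0 S1 S2 using n by (simp add: field_simps power2_eq_square)
  finally have "(\<Sum>k<?N. complex_of_real ((\<nu> k - l)\<^sup>2) * q k) = complex_of_real ((1 - l\<^sup>2) / real n)" .
  from arg_cong[OF this, of Re] show ?thesis
    by (simp add: q_def mult.commute)
qed


lemma swap_test_failure_probability:
  assumes dm: "density_matrix d \<rho>" and us: "unit_state d \<psi>"
    and ev: "mat_exp (- \<i> \<cdot>\<^sub>m \<rho>) *\<^sub>v \<psi> = exp (\<i> * complex_of_real \<theta>) \<cdot>\<^sub>v \<psi>"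
    and n: "0 < n" and \<epsilon>: "0 < \<epsilon>" and V: "unitary_mat (d^n*d) V"
    and obs: "swap_observable d n = V * diag_matrix (d^n*d) (\<lambda>k. complex_of_real (\<nu> k)) * mat_adjoint V"
  shows "(\<Sum>k\<in>{k. k < d^n*d \<and> \<not> phase_close \<epsilon> (- \<nu> k) \<theta>}.
      Re (mtrace (proj (col V k) * kron (kpow \<rho> n) (proj \<psi>)))) \<le> 1 / (real n * \<epsilon>\<^sup>2)"
proof -
  obtain l :: real and K :: int where eig: "\<rho> *\<^sub>v \<psi> = complex_of_real l \<cdot>\<^sub>v \<psi>"
    and \<theta>: "\<theta> = - l + 2 * pi * of_int K"
    using density_matrix_eigenphase[OF dm us ev] by blast
  have \<rho>: "\<rho> \<in> carrier_mat d d" and tr: "mtrace \<rho> = 1"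
    using dm by (auto simp: density_matrix_def psd_def)
  interpret eigen_probe d n \<rho> \<psi> "complex_of_real l"
    using \<rho> tr us eig n by unfold_locales
  define p where "p k = Re (mtrace (proj (col V k) * probe_state n \<rho> \<psi>))" for k
  have Vc: "V \<in> carrier_mat (d^n*d) (d^n*d)" using V by (simp add: unitary_mat_def)
  have p: "0 \<le> p k" if "k < d^n*d" for k
    unfolding p_def using Vc that by (intro density_probe_outcome_nonneg[OF dm psi_carrier]) (metis carrier_matD(1) carrier_vecI dim_col)
  have "(\<Sum>k<d^n*d. p k * (\<nu> k - l)\<^sup>2) = (1 - l\<^sup>2) / real n"
    unfolding p_def by (rule swap_measurement_second_moment[OF V obs refl])
  also have "\<dots> \<le> 1 / real n" using n by (simp add: divide_right_mono)
  finally have variance: "(\<Sum>k<d^n*d. p k * (\<nu> k - l)\<^sup>2) \<le> 1 / real n" .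
  have far: "\<epsilon> < \<bar>\<nu> k - l\<bar>" if "k \<in> {k. k < d^n*d \<and> \<not> phase_close \<epsilon> (- \<nu> k) \<theta>}" for k
  proof (rule ccontr)
    assume "\<not> \<epsilon> < \<bar>\<nu> k - l\<bar>"
    hence "\<bar>- \<nu> k - \<theta> - 2 * pi * of_int (- K)\<bar> \<le> \<epsilon>" unfolding \<theta> by simp
    thus False using that unfolding phase_close_def by blast
  qed
  have "(\<Sum>k\<in>{k. k < d^n*d \<and> \<not> phase_close \<epsilon> (- \<nu> k) \<theta>}. p k) \<le> (1 / real n) / \<epsilon>\<^sup>2"
    by (rule weighted_chebyshev[OF p _ far \<epsilon> variance]) auto
  thus ?thesis by (simp add: p_def probe_state_def)
qed

lemma sample_size_exists:
  fixes \<delta> \<epsilon> :: real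
  assumes "0 < \<delta>" and "0 < \<epsilon>" and "\<epsilon> < 1"
  shows "\<exists>n::nat. 0 < n \<and> 1 / (real n * \<epsilon>\<^sup>2) \<le> \<delta> \<and> real n \<le> (1 / \<delta> + 1) / \<epsilon>\<^sup>2"
proof -
  define r where "r = 1 / (\<delta> * \<epsilon>\<^sup>2)"
  have r: "0 < r" unfolding r_def using assms by simp
  define n where "n = nat \<lceil>r\<rceil>"
  have rn: "r \<le> real n" "real n \<le> r + 1"
    unfolding n_def using r by linarith+
  have npos: "0 < real n" using rn(1) r by linarith
  have "1 \<le> 1 / \<epsilon>\<^sup>2" using assms by (simp add: power_le_one)
  moreover have "(1 / \<delta> + 1) / \<epsilon>\<^sup>2 = r + 1 / \<epsilon>\<^sup>2" unfolding r_def using assms by (simp add: field_simps)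
  moreover have "1 / (real n * \<epsilon>\<^sup>2) \<le> \<delta>"
    using rn(1) npos assms unfolding r_def by (simp add: field_simps)
  ultimately show ?thesis using rn r by (intro exI[of _ n]) auto
qed

lemma swap_test_phase_estimation:
  fixes \<delta> \<epsilon> :: real
  assumes \<delta>: "0 < \<delta>" and \<epsilon>: "0 < \<epsilon>" "\<epsilon> < 1"
  shows "\<exists>(n::nat) (m::nat) (est :: nat \<Rightarrow> real) (M :: nat \<Rightarrow> complex mat).
       real n \<le> (1 / \<delta> + 1) / \<epsilon>\<^sup>2 \<and>
       povm (d ^ (n + 1)) m M \<and>
       (\<forall>\<rho> \<psi> \<theta>. density_matrix d \<rho> \<longrightarrow> unit_state d \<psi> \<longrightarrow>
          mat_exp (- \<i> \<cdot>\<^sub>m \<rho>) *\<^sub>v \<psi> = exp (\<i> * complex_of_real \<theta>) \<cdot>\<^sub>v \<psi> \<longrightarrow>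
          (\<Sum>k\<in>{k. k < m \<and> \<not> phase_close \<epsilon> (est k) \<theta>}.
              Re (mtrace (M k * kron (kpow \<rho> n) (proj \<psi>)))) \<le> \<delta>)"
proof -
  obtain n where n: "0 < n" and small: "1 / (real n * \<epsilon>\<^sup>2) \<le> \<delta>" and size: "real n \<le> (1 / \<delta> + 1) / \<epsilon>\<^sup>2"
    using sample_size_exists[OF \<delta> \<epsilon>] by blast
  obtain V \<nu> where V: "unitary_mat (d^n*d) V"
    and obs: "swap_observable d n = V * diag_matrix (d^n*d) (\<lambda>k. complex_of_real (\<nu> k)) * mat_adjoint V"
    using hermitian_spectral_decomposition[OF swap_observable_carrier swap_observable_hermitian] by blast
  have "povm (d ^ (n + 1)) (d^n*d) (\<lambda>k. proj (col V k))"
    using unitary_povm[OF V] by (simp add: mult.commute)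
  moreover have "\<forall>\<rho> \<psi> \<theta>. density_matrix d \<rho> \<longrightarrow> unit_state d \<psi> \<longrightarrow>
      mat_exp (- \<i> \<cdot>\<^sub>m \<rho>) *\<^sub>v \<psi> = exp (\<i> * complex_of_real \<theta>) \<cdot>\<^sub>v \<psi> \<longrightarrow>
      (\<Sum>k\<in>{k. k < d^n*d \<and> \<not> phase_close \<epsilon> (- \<nu> k) \<theta>}.
          Re (mtrace (proj (col V k) * kron (kpow \<rho> n) (proj \<psi>)))) \<le> \<delta>"
    using order_trans[OF swap_test_failure_probability[OF _ _ _ n \<epsilon>(1) V obs] small] by blast
  ultimately show ?thesis
    using size
    by (intro exI[of _ n] exI[of _ "d^n*d"] exI[of _ "\<lambda>k. - \<nu> k"] exI[of _ "\<lambda>k. proj (col V k)"] conjI) simp_all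
qed

theorem mainTheorem16:
  fixes \<delta> :: real
  assumes "0 < \<delta>" and "\<delta> < 1"
  shows "\<exists>C::real. \<forall>(d::nat) (\<epsilon>::real). 0 < d \<longrightarrow> 0 < \<epsilon> \<longrightarrow> \<epsilon> < 1 \<longrightarrow>
    (\<exists>(n::nat) (m::nat) (est :: nat \<Rightarrow> real) (M :: nat \<Rightarrow> complex mat).
       real n \<le> C / \<epsilon>\<^sup>2 \<and>
       povm (d ^ (n + 1)) m M \<and>
       (\<forall>\<rho> \<psi> \<theta>. density_matrix d \<rho> \<longrightarrow> unit_state d \<psi> \<longrightarrow>
          mat_exp (- \<i> \<cdot>\<^sub>m \<rho>) *\<^sub>v \<psi> = exp (\<i> * complex_of_real \<theta>) \<cdot>\<^sub>v \<psi> \<longrightarrow>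
          (\<Sum>k\<in>{k. k < m \<and> \<not> phase_close \<epsilon> (est k) \<theta>}.
              Re (mtrace (M k * kron (kpow \<rho> n) (proj \<psi>)))) \<le> \<delta>))"
  by (intro exI[of _ "1 / \<delta> + 1"] allI impI swap_test_phase_estimation[OF assms(1)])

end
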